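(* Let $\nu_m=\nu^{\rhd m}$ be the $m$-fold monotone convolution of the standard semicircle law $\nu$ (equivalently the vacuum distribution of $G_1+\cdots+G_m$). Then for each $m\ge1$ the support of $\nu_m$ is a symmetric interval $[-a_m,a_m]$, where $a_1=2$ and $$a_{m+1}=a_m+\frac1{a_m}\qquad(m\ge1).$$ Moreover $\mathrm{supp}(\nu_{m-1})\subseteq\mathrm{supp}(\nu_m)$ for $m\ge2$.
   Context: The standard semicircle law is $\nu(dx)=\frac1{2\pi}\sqrt{4-x^2}\mathbf 1_{[-2,2]}dx$. For probability measures $\mu,\nu$ on $\mathbb R$ with Cauchy transforms $\mathcal G_\mu(z)=\int\frac{\mu(dx)}{z-x}$ and reciprocal Cauchy transforms $H_\mu=1/\mathcal G_\mu$, the monotone convolution $\mu\rhd\nu$ is the unique probability measure $\rho$ with $H_\rho=H_\mu\circ H_\nu$ on $\mathbb C^+$; $\nu^{\rhd m}=\nu\rhd\cdots\rhd\nu$ ($m$ factors). In the paper's model, $\nu_m$ is the vacuum distribution of $G_1+\cdots+G_m$, where $G_i=A_i+A_i^\dagger$ are the position operators on the weakly monotone Fock space. *)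

theory Defs
  imports "HOL-Probability.Probability"
begin

definition semicircle :: "real measure" where
  "semicircle = density lborel
     (\<lambda>x. ennreal (indicator {-2..2} x * sqrt (4 - x\<^sup>2) / (2 * pi)))"

definition cauchy_transform :: "real measure \<Rightarrow> complex \<Rightarrow> complex" where
  "cauchy_transform M z = (\<integral>x. 1 / (z - complex_of_real x) \<partial>M)"

definition recip_cauchy :: "real measure \<Rightarrow> complex \<Rightarrow> complex" where
  "recip_cauchy M z = 1 / cauchy_transform M z"

definition monotone_conv :: "real measure \<Rightarrow> real measure \<Rightarrow> real measure" where
  "monotone_conv \<mu> \<nu> = (THE \<rho>. prob_space \<rho> \<and> sets \<rho> = sets borel \<and>
      (\<forall>z. 0 < Im z \<longrightarrow> recip_cauchy \<rho> z = recip_cauchy \<mu> (recip_cauchy \<nu> z)))"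

fun monotone_power :: "real measure \<Rightarrow> nat \<Rightarrow> real measure" where
  "monotone_power \<mu> 0 = return borel 0"
| "monotone_power \<mu> (Suc m) = monotone_conv (monotone_power \<mu> m) \<mu>"

definition msupport :: "real measure \<Rightarrow> real set" where
  "msupport M = {x. \<forall>e>0. 0 < measure M (ball x e)}"

end

theory Submission
  imports Defs "HOL-Complex_Analysis.Complex_Analysis"
begin

text \<open>Let \<open>G\<close> be the Cauchy transform of the semicircle law \<open>\<nu>\<close>. It solves \<open>G\<^sup>2 - z G + 1 = 0\<close>,
  so \<open>H\<^sub>\<nu>(z) = z - G(z)\<close> and \<open>z = G + 1/G\<close>. With this, \<open>1 / (H\<^sub>\<nu>(z) - x)\<close> is the Cauchy
  transform of an explicit law \<open>\<rho>\<^sub>x = \<delta>\<^sub>x \<rhd> \<nu>\<close>: a density on \<open>[-2, 2]\<close> and, for \<open>\<bar>x\<bar> > 1\<close>, an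
  atom of mass \<open>1 - 1/x\<^sup>2\<close> at the Joukowski image \<open>x + 1/x\<close>. Hence \<open>\<mu> \<rhd> \<nu>\<close> is the mixture of the
  \<open>\<rho>\<^sub>x\<close> over \<open>x \<sim> \<mu>\<close> (uniqueness comes from Stieltjes inversion), and its support is \<open>[-2, 2]\<close>
  together with the Joukowski image of \<open>supp \<mu> \<inter> {\<bar>x\<bar> > 1}\<close>. As \<open>x \<mapsto> x + 1/x\<close> increases on
  \<open>[1, \<infinity>)\<close>, starting from \<open>\<delta>\<^sub>0\<close> the supports are the intervals \<open>[-a\<^sub>m, a\<^sub>m]\<close> with
  \<open>a\<^sub>0 = 1\<close> and \<open>a\<^sub>m\<^sub>+\<^sub>1 = a\<^sub>m + 1/a\<^sub>m\<close>.\<close>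

section \<open>Integrals against the semicircle density\<close>

lemma power2_le_4: "\<bar>t\<bar> \<le> 2 \<Longrightarrow> (t::real)\<^sup>2 \<le> 4"
  using power_mono[of "\<bar>t\<bar>" 2 2] by simp

lemma power2_less_4: "\<bar>t\<bar> < 2 \<Longrightarrow> (t::real)\<^sup>2 < 4"
  using power_strict_mono[of "\<bar>t\<bar>" 2 2] by simp

lemma sqrt_one_minus_half_sq: "sqrt (1 - (t/2)\<^sup>2) = sqrt (4 - (t::real)\<^sup>2) / 2"
proof -
  have "1 - (t/2)\<^sup>2 = (4 - t\<^sup>2) / 4" by (simp add: field_simps power2_eq_square)
  then show ?thesis by (simp only: real_sqrt_divide real_sqrt_four)
qed

lemma has_integral_sqrt_four_minus_sq:
  "((\<lambda>t. sqrt (4 - t\<^sup>2)) has_integral 2 * pi) {-2..2::real}"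
proof -
  define F where "F t = (t * sqrt (4 - t\<^sup>2) + 4 * arcsin (t/2)) / 2" for t :: real
  have "((\<lambda>t. sqrt (4 - t\<^sup>2)) has_integral (F 2 - F (-2))) {-2..2::real}"
  proof (rule fundamental_theorem_of_calculus_interior)
    show "continuous_on {-2..2} F" unfolding F_def
      by (intro continuous_intros) auto
  next
    fix t :: real assume t: "t \<in> {-2<..<2}"
    define s where "s = sqrt (4 - t\<^sup>2)"
    have t4: "0 < 4 - t\<^sup>2" using power2_less_4[of t] t by (simp add: abs_less_iff)
    then have s: "0 < s" "s\<^sup>2 = 4 - t\<^sup>2" by (simp_all add: s_def)
    have "(F has_real_derivative
      ((s + t * (inverse s / 2 * (- (2 * t)))) + 4 * (inverse (s/2) * (1/2))) / 2) (at t)"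
      unfolding F_def s_def sqrt_one_minus_half_sq[symmetric] using t t4
      by (auto intro!: derivative_eq_intros DERIV_arcsin simp: power2_eq_square)
    moreover have "((s + t * (inverse s / 2 * (- (2 * t)))) + 4 * (inverse (s/2) * (1/2))) / 2 = s"
      using s by (simp add: field_simps power2_eq_square)
    ultimately have "(F has_real_derivative s) (at t)" by (rule DERIV_cong)
    then show "(F has_vector_derivative sqrt (4 - t\<^sup>2)) (at t)"
      by (simp add: has_real_derivative_iff_has_vector_derivative s_def)
  qed auto
  moreover have "F 2 - F (-2) = 2 * pi" by (simp add: F_def)
  ultimately show ?thesis by simp
qed

lemma one_minus_sq_pole_arg:
  fixes w t :: real
  assumes "w > 2" "\<bar>t\<bar> \<le> 2"
  shows "1 - ((w*t - 4) / (2*(w-t)))\<^sup>2 = (w\<^sup>2 - 4) * (4 - t\<^sup>2) / (4*(w-t)\<^sup>2)"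
proof -
  have "2*(w-t) \<noteq> 0" using assms by auto
  then have "1 - ((w*t - 4) / (2*(w-t)))\<^sup>2 = ((2*(w-t))\<^sup>2 - (w*t - 4)\<^sup>2) / (2*(w-t))\<^sup>2"
    by (simp add: power_divide field_simps)
  also have "\<dots> = (w\<^sup>2 - 4) * (4 - t\<^sup>2) / (4*(w-t)\<^sup>2)"
    by (simp add: power2_eq_square algebra_simps)
  finally show ?thesis .
qed

text \<open>A primitive of \<open>t \<mapsto> sqrt (4 - t\<^sup>2) / (w - t)\<close> on \<open>[-2, 2]\<close> for \<open>w > 2\<close>; the argument of the
  second \<open>arcsin\<close> maps \<open>[-2, 2]\<close> monotonically onto \<open>[-1, 1]\<close>.\<close>

definition sc_pole_primitive :: "real \<Rightarrow> real \<Rightarrow> real" where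
  "sc_pole_primitive w t =
     w * arcsin (t/2) - sqrt (4 - t\<^sup>2) - sqrt (w\<^sup>2 - 4) * arcsin ((w*t - 4) / (2*(w-t)))"

lemma DERIV_sc_pole_primitive:
  fixes w t :: real assumes w: "w > 2" and t: "\<bar>t\<bar> < 2"
  shows "(sc_pole_primitive w has_real_derivative sqrt (4 - t\<^sup>2) / (w - t)) (at t)"
proof -
  define s r where "s = sqrt (w\<^sup>2 - 4)" and "r = sqrt (4 - t\<^sup>2)"
  define u where "u t = (w*t - 4) / (2*(w-t))" for t
  have w4: "0 < w\<^sup>2 - 4" using w power_strict_mono[of 2 w 2] by simp
  have t4: "0 < 4 - t\<^sup>2" using power2_less_4[OF t] by simp
  have s: "0 < s" "s\<^sup>2 = w\<^sup>2 - 4" and r: "0 < r" "r\<^sup>2 = 4 - t\<^sup>2" and wt: "0 < w - t"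
    using w4 t4 t w by (simp_all add: s_def r_def)
  have "(s * r / (2 * (w - t)))\<^sup>2 = s\<^sup>2 * r\<^sup>2 / (4 * (w - t)\<^sup>2)"
    by (simp add: power2_eq_square algebra_simps)
  then have "1 - (u t)\<^sup>2 = (s * r / (2 * (w - t)))\<^sup>2"
    unfolding u_def using one_minus_sq_pole_arg[OF w] t s r by simp
  then have sqrt_u: "sqrt (1 - (u t)\<^sup>2) = s * r / (2 * (w - t))"
    using s r wt by simp
  then have "0 < sqrt (1 - (u t)\<^sup>2)" using s r wt by simp
  then have "\<bar>u t\<bar> < 1" by (simp add: abs_square_less_1[symmetric])
  define du where "du = (w * (2*(w-t)) - (w*t-4) * (2 * (0 - 1))) / (2*(w-t))\<^sup>2"
  have "(u has_real_derivative du) (at t)"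
    unfolding u_def du_def using wt by (auto intro!: derivative_eq_intros simp: power2_eq_square)
  then have deriv: "(sc_pole_primitive w has_real_derivative
      w * (inverse (sqrt (1 - (t/2)\<^sup>2)) * (1/2)) - (inverse (sqrt (4 - t\<^sup>2)) / 2 * (- (2 * t)))
        - s * (inverse (sqrt (1 - (u t)\<^sup>2)) * du)) (at t)"
    unfolding sc_pole_primitive_def s_def[symmetric] u_def[symmetric] using t t4 \<open>\<bar>u t\<bar> < 1\<close>
    by (auto intro!: derivative_eq_intros DERIV_arcsin simp: power2_eq_square abs_less_iff)
  have "w * (2*(w-t)) - (w*t-4) * (2 * (0 - 1)) = 2 * s\<^sup>2" "(2*(w-t))\<^sup>2 = 4 * (w-t)\<^sup>2"
    unfolding s(2) by (simp_all add: algebra_simps power2_eq_square)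
  then have du: "du = s\<^sup>2 / (2*(w-t)\<^sup>2)" unfolding du_def by simp
  have cancel: "s * (inverse (s * r / (2 * d)) * (s\<^sup>2 / (2 * d\<^sup>2))) = s\<^sup>2 / (r * d)" if "0 < d" for d
    using r s that by (simp add: field_simps power2_eq_square)
  have "w * (inverse (sqrt (1 - (t/2)\<^sup>2)) * (1/2)) - (inverse (sqrt (4 - t\<^sup>2)) / 2 * (- (2 * t)))
        - s * (inverse (sqrt (1 - (u t)\<^sup>2)) * du) = (w + t) / r - s\<^sup>2 / (r * (w - t))"
    unfolding sqrt_one_minus_half_sq sqrt_u r_def[symmetric] du cancel[OF wt]
    using r by (simp add: field_simps)
  also have "\<dots> = ((w + t) * (w - t) - s\<^sup>2) / (r * (w - t))"
    using r wt by (simp add: field_simps)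
  also have "(w + t) * (w - t) - s\<^sup>2 = r * r"
    using r s by (simp add: algebra_simps power2_eq_square)
  also have "r * r / (r * (w - t)) = sqrt (4 - t\<^sup>2) / (w - t)"
    unfolding r_def[symmetric] using r(1) by simp
  finally show ?thesis by (rule DERIV_cong[OF deriv])
qed

lemma has_integral_sqrt_four_minus_sq_div_gt_2:
  fixes w :: real assumes w: "w > 2"
  shows "((\<lambda>t. sqrt (4 - t\<^sup>2) / (w - t)) has_integral pi * (w - sqrt (w\<^sup>2 - 4))) {-2..2}"
proof -
  have "((\<lambda>t. sqrt (4 - t\<^sup>2) / (w - t)) has_integral
      (sc_pole_primitive w 2 - sc_pole_primitive w (-2))) {-2..2::real}"
  proof (rule fundamental_theorem_of_calculus_interior)
    have "-1 \<le> (w*t - 4) / (2*(w-t)) \<and> (w*t - 4) / (2*(w-t)) \<le> 1" if "\<bar>t\<bar> \<le> 2" for t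
    proof -
      have "0 \<le> (w\<^sup>2 - 4) * (4 - t\<^sup>2) / (4*(w-t)\<^sup>2)"
        using w power_strict_mono[of 2 w 2] power2_le_4[OF that] by simp
      then have "((w*t - 4) / (2*(w-t)))\<^sup>2 \<le> 1" using one_minus_sq_pole_arg[OF w that] by simp
      then have "\<bar>(w*t - 4) / (2*(w-t))\<bar> \<le> 1" by (simp only: abs_square_le_1)
      then show ?thesis by linarith
    qed
    then show "continuous_on {-2..2} (sc_pole_primitive w)"
      unfolding sc_pole_primitive_def using w by (intro continuous_intros) auto
    show "(sc_pole_primitive w has_vector_derivative sqrt (4 - t\<^sup>2) / (w - t)) (at t)"
      if "t \<in> {-2<..<2}" for t
      using DERIV_sc_pole_primitive[OF w, of t] that
      by (simp add: has_real_derivative_iff_has_vector_derivative abs_less_iff)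
  qed simp
  moreover have "(w*2 - 4) / (2*(w-2)) = 1" "(w*(-2) - 4) / (2*(w-(-2))) = -1"
    using w by (simp_all add: field_simps)
  then have "sc_pole_primitive w 2 - sc_pole_primitive w (-2) = pi * (w - sqrt (w\<^sup>2 - 4))"
    by (simp add: sc_pole_primitive_def algebra_simps)
  ultimately show ?thesis by simp
qed

lemma has_integral_sqrt_four_minus_sq_div_2:
  "((\<lambda>t. sqrt (4 - t\<^sup>2) / (2 - t)) has_integral 2 * pi) {-2..2::real}"
proof -
  define F where "F t = 2 * arcsin (t/2) - sqrt (4 - t\<^sup>2)" for t :: real
  have "((\<lambda>t. sqrt (4 - t\<^sup>2) / (2 - t)) has_integral (F 2 - F (-2))) {-2..2::real}"
  proof (rule fundamental_theorem_of_calculus_interior)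
    show "continuous_on {-2..2} F" unfolding F_def
      by (intro continuous_intros) auto
  next
    fix t :: real assume t: "t \<in> {-2<..<2}"
    define r where "r = sqrt (4 - t\<^sup>2)"
    have t4: "0 < 4 - t\<^sup>2" using power2_less_4[of t] t by (simp add: abs_less_iff)
    then have r: "0 < r" "r\<^sup>2 = 4 - t\<^sup>2" by (simp_all add: r_def)
    have "(F has_real_derivative
      2 * (inverse (r/2) * (1/2)) - (inverse r / 2 * (- (2 * t)))) (at t)"
      unfolding F_def r_def sqrt_one_minus_half_sq[symmetric] using t t4
      by (auto intro!: derivative_eq_intros DERIV_arcsin simp: power2_eq_square)
    moreover have "2 * (inverse (r/2) * (1/2)) - (inverse r / 2 * (- (2 * t))) = r / (2 - t)"
    proof -
      have "(2 + t) * (2 - t) = r * r" using r by (simp add: algebra_simps power2_eq_square)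
      then show ?thesis using r t by (simp add: field_simps)
    qed
    ultimately have "(F has_real_derivative r / (2 - t)) (at t)" by (rule DERIV_cong)
    then show "(F has_vector_derivative sqrt (4 - t\<^sup>2) / (2 - t)) (at t)"
      by (simp add: has_real_derivative_iff_has_vector_derivative r_def)
  qed auto
  moreover have "F 2 - F (-2) = 2 * pi" by (simp add: F_def)
  ultimately show ?thesis by simp
qed

lemma has_integral_sqrt_four_minus_sq_div_ge_2:
  fixes w :: real assumes "w \<ge> 2"
  shows "((\<lambda>t. sqrt (4 - t\<^sup>2) / (w - t)) has_integral pi * (w - sqrt (w\<^sup>2 - 4))) {-2..2}"
  using has_integral_sqrt_four_minus_sq_div_gt_2[of w] has_integral_sqrt_four_minus_sq_div_2 assms
  by (cases "w = 2") (auto simp: mult.commute)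

lemma has_integral_sqrt_four_minus_sq_div_le_minus_2:
  fixes w :: real assumes w: "w \<le> -2"
  shows "((\<lambda>t. sqrt (4 - t\<^sup>2) / (w - t)) has_integral pi * (w + sqrt (w\<^sup>2 - 4))) {-2..2}"
proof -
  define g where "g t = sqrt (4 - t\<^sup>2) / (-w - t)" for t
  have "(g has_integral pi * (-w - sqrt ((-w)\<^sup>2 - 4))) {-2..2}"
    unfolding g_def using has_integral_sqrt_four_minus_sq_div_ge_2[of "-w"] w by simp
  then have "((\<lambda>t. g (-t)) has_integral pi * (-w - sqrt ((-w)\<^sup>2 - 4))) {-2..- (-2)}"
    using has_integral_reflect_real[of g _ "-2" 2] by blast
  then have "((\<lambda>t. - g (-t)) has_integral - (pi * (-w - sqrt ((-w)\<^sup>2 - 4)))) {-2..2}"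
    by (intro has_integral_neg) simp
  moreover have "(\<lambda>t. - g (-t)) = (\<lambda>t. sqrt (4 - t\<^sup>2) / (w - t))"
    by (auto simp: g_def fun_eq_iff minus_divide_right)
  ultimately show ?thesis by (simp add: algebra_simps)
qed

lemma lborel_integral_indicator_eq_has_integral:
  fixes h :: "real \<Rightarrow> real"
  assumes h: "(h has_integral v) {a..b}" and nonneg: "\<And>t. t \<in> {a..b} \<Longrightarrow> 0 \<le> h t"
    and meas: "(\<lambda>t. indicator {a..b} t * h t) \<in> borel_measurable borel"
  shows "integrable lborel (\<lambda>t. indicator {a..b} t * h t)"
    and "integral\<^sup>L lborel (\<lambda>t. indicator {a..b} t * h t) = v"
proof -
  have "(\<lambda>t. indicator {a..b} t * h t) = (\<lambda>t. if t \<in> {a..b} then h t else 0)"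
    by (auto simp: indicator_def)
  then have hu: "((\<lambda>t. indicator {a..b} t * h t) has_integral v) UNIV"
    using h has_integral_restrict_UNIV by metis
  have nonneg': "\<And>t. 0 \<le> indicator {a..b} t * h t" using nonneg by (auto simp: indicator_def)
  have nn: "(\<integral>\<^sup>+t. ennreal (indicator {a..b} t * h t) \<partial>lborel) = ennreal v"
    by (rule nn_integral_has_integral_lborel[OF meas nonneg' hu])
  show int: "integrable lborel (\<lambda>t. indicator {a..b} t * h t)"
    by (rule integrableI_nn_integral_finite[OF _ _ nn]) (use meas nonneg' in auto)
  show "integral\<^sup>L lborel (\<lambda>t. indicator {a..b} t * h t) = v"
    using has_integral_integral_real[OF int] hu has_integral_unique by blast
qed

definition sc_density :: "real \<Rightarrow> real" where
  "sc_density x = indicator {-2..2} x * sqrt (4 - x\<^sup>2) / (2 * pi)"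

lemma borel_measurable_sc_density[measurable]: "sc_density \<in> borel_measurable borel"
  unfolding sc_density_def by measurable

lemma sc_density_nonneg: "0 \<le> sc_density x"
  unfolding sc_density_def using power2_le_4[of x] by (auto simp: indicator_def)

lemma sc_density_pos_iff: "0 < sc_density x \<longleftrightarrow> \<bar>x\<bar> < 2"
proof -
  have "\<bar>x\<bar> < 2 \<longleftrightarrow> x\<^sup>2 < 4"
    by (metis real_sqrt_abs real_sqrt_four real_sqrt_less_iff)
  then show ?thesis by (auto simp: sc_density_def indicator_def zero_less_divide_iff)
qed

lemma sc_density_eq_0_iff: "sc_density x = 0 \<longleftrightarrow> 2 \<le> \<bar>x\<bar>"
  using sc_density_pos_iff[of x] sc_density_nonneg[of x] by linarith

lemma semicircle_eq_density: "semicircle = density lborel (\<lambda>x. ennreal (sc_density x))"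
  unfolding semicircle_def sc_density_def ..

lemma sc_density_integral:
  shows "integrable lborel sc_density" and "integral\<^sup>L lborel sc_density = 1"
proof -
  have hi: "((\<lambda>t. sqrt (4 - t\<^sup>2) / (2*pi)) has_integral 1) {-2..2}"
    using has_integral_divide[OF has_integral_sqrt_four_minus_sq, of "2*pi"] by simp
  have nonneg: "\<And>t. t \<in> {-2..2} \<Longrightarrow> 0 \<le> sqrt (4 - t\<^sup>2) / (2*pi)"
    using power2_le_4 by auto
  have meas: "(\<lambda>t. indicator {-2..2} t * (sqrt (4 - t\<^sup>2) / (2*pi))) \<in> borel_measurable borel"
    by measurable
  have eq: "sc_density = (\<lambda>t. indicator {-2..2} t * (sqrt (4 - t\<^sup>2) / (2*pi)))"
    unfolding sc_density_def by auto
  show "integrable lborel sc_density" "integral\<^sup>L lborel sc_density = 1"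
    unfolding eq using lborel_integral_indicator_eq_has_integral[OF hi nonneg meas] by auto
qed

definition sc_G_real :: "real \<Rightarrow> real" where
  "sc_G_real w = (if w \<ge> 2 then (w - sqrt (w\<^sup>2 - 4)) / 2 else (w + sqrt (w\<^sup>2 - 4)) / 2)"

lemma sc_density_div_integral:
  fixes w :: real assumes w: "\<bar>w\<bar> \<ge> 2"
  shows "integrable lborel (\<lambda>t. sc_density t / (w - t))"
    and "integral\<^sup>L lborel (\<lambda>t. sc_density t / (w - t)) = sc_G_real w"
proof -
  have "integrable lborel (\<lambda>t. sc_density t / (w - t)) \<and>
      integral\<^sup>L lborel (\<lambda>t. sc_density t / (w - t)) = sc_G_real w"
  proof (cases "w \<ge> 2")
    case True
    have hi: "((\<lambda>t. sqrt (4 - t\<^sup>2) / (w - t) / (2*pi)) has_integral (w - sqrt (w\<^sup>2 - 4)) / 2) {-2..2}"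
      using has_integral_divide[OF has_integral_sqrt_four_minus_sq_div_ge_2[OF True], of "2*pi"] by simp
    have nonneg: "\<And>t. t \<in> {-2..2} \<Longrightarrow> 0 \<le> sqrt (4 - t\<^sup>2) / (w - t) / (2*pi)"
      using power2_le_4 True by auto
    have meas: "(\<lambda>t. indicator {-2..2} t * (sqrt (4 - t\<^sup>2) / (w - t) / (2*pi))) \<in> borel_measurable borel"
      by measurable
    have eq: "(\<lambda>t. sc_density t / (w - t)) = (\<lambda>t. indicator {-2..2} t * (sqrt (4 - t\<^sup>2) / (w - t) / (2*pi)))"
      unfolding sc_density_def by (auto simp: fun_eq_iff)
    show ?thesis unfolding eq using lborel_integral_indicator_eq_has_integral[OF hi nonneg meas] True
      by (auto simp: sc_G_real_def)
  next
    case False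
    then have w2: "w \<le> -2" using w by auto
    have hi: "((\<lambda>t. - (sqrt (4 - t\<^sup>2) / (w - t) / (2*pi))) has_integral - ((w + sqrt (w\<^sup>2 - 4)) / 2)) {-2..2}"
      using has_integral_neg[OF has_integral_divide[OF has_integral_sqrt_four_minus_sq_div_le_minus_2[OF w2], of "2*pi"]]
      by simp
    have nonneg: "0 \<le> - (sqrt (4 - t\<^sup>2) / (w - t) / (2*pi))" if "t \<in> {-2..2}" for t
    proof -
      have "sqrt (4 - t\<^sup>2) / (w - t) \<le> 0"
        using power2_le_4[of t] that w2 by (intro divide_nonneg_nonpos) auto
      from divide_nonpos_pos[OF this, of "2*pi"] show ?thesis by simp
    qed
    have meas: "(\<lambda>t. indicator {-2..2} t * (- (sqrt (4 - t\<^sup>2) / (w - t) / (2*pi)))) \<in> borel_measurable borel"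
      by measurable
    have eq: "(\<lambda>t. sc_density t / (w - t)) = (\<lambda>t. - (indicator {-2..2} t * (- (sqrt (4 - t\<^sup>2) / (w - t) / (2*pi)))))"
      unfolding sc_density_def by (auto simp: fun_eq_iff)
    show ?thesis unfolding eq using lborel_integral_indicator_eq_has_integral[OF hi nonneg meas] False
      by (auto simp: sc_G_real_def)
  qed
  then show "integrable lborel (\<lambda>t. sc_density t / (w - t))"
    and "integral\<^sup>L lborel (\<lambda>t. sc_density t / (w - t)) = sc_G_real w"
    by auto
qed

lemma sc_G_real_quadratic: "2 < w \<Longrightarrow> (sc_G_real w)\<^sup>2 - w * sc_G_real w + 1 = 0"
proof -
  assume w: "2 < w"
  define s where "s = sqrt (w\<^sup>2 - 4)"
  have s2: "s\<^sup>2 = w\<^sup>2 - 4" using w power_strict_mono[of 2 w 2] by (simp add: s_def)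
  have "sc_G_real w = (w - s) / 2" using w by (simp add: sc_G_real_def s_def)
  then have "(sc_G_real w)\<^sup>2 - w * sc_G_real w + 1 = ((w - s) / 2)\<^sup>2 - w * ((w - s) / 2) + 1"
    by (simp only:)
  also have "\<dots> = (s\<^sup>2 - w\<^sup>2 + 4) / 4"
    by (simp add: power2_eq_square field_simps)
  finally have "(sc_G_real w)\<^sup>2 - w * sc_G_real w + 1 = (s\<^sup>2 - w\<^sup>2 + 4) / 4" .
  then show ?thesis using s2 by simp
qed

definition joukowski :: "real \<Rightarrow> real" where
  "joukowski x = x + 1 / x"

lemma joukowski_minus: "joukowski (-x) = - joukowski x"
  by (simp add: joukowski_def)

lemma joukowski_sq_minus_4: "x \<noteq> 0 \<Longrightarrow> (joukowski x)\<^sup>2 - 4 = (x - 1 / x)\<^sup>2"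
  by (simp add: joukowski_def power2_eq_square field_simps)

lemma abs_joukowski_ge_2: "x \<noteq> 0 \<Longrightarrow> 2 \<le> \<bar>joukowski x\<bar>"
proof -
  assume "x \<noteq> 0"
  then have "4 \<le> (joukowski x)\<^sup>2"
    using joukowski_sq_minus_4[of x] zero_le_power2[of "x - 1/x"] by linarith
  then show ?thesis using abs_le_square_iff[of 2 "joukowski x"] by simp
qed

lemma sc_G_real_joukowski:
  assumes x: "x \<noteq> 0"
  shows "sc_G_real (joukowski x) = (if \<bar>x\<bar> \<le> 1 then x else 1 / x)"
proof -
  have s: "sqrt ((x + 1 / x)\<^sup>2 - 4) = \<bar>x - 1 / x\<bar>"
    using joukowski_sq_minus_4[OF x] by (simp add: joukowski_def)
  show ?thesis
  proof (cases "0 < x")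
    case True
    then have "2 \<le> joukowski x" using abs_joukowski_ge_2[OF x] by (simp add: joukowski_def)
    moreover have "x \<le> 1 / x \<longleftrightarrow> x \<le> 1"
      using True by (simp add: field_simps) (smt (verit) less_1_mult mult_le_one)
    ultimately show ?thesis
      using True by (auto simp: sc_G_real_def joukowski_def s abs_if)
  next
    case False
    then have x0: "x < 0" using x by simp
    moreover have "1 / x < 0" using x0 by simp
    ultimately have "\<not> 2 \<le> joukowski x"
      unfolding joukowski_def by linarith
    moreover have "1 / x \<le> x \<longleftrightarrow> -1 \<le> x"
      using x0 by (simp add: field_simps) (smt (verit) less_1_mult mult_le_one mult_minus_left minus_mult_minus)
    ultimately show ?thesis
      using x0 by (auto simp: sc_G_real_def s joukowski_def abs_if)
  qed
qed

section \<open>The Cauchy transform of the semicircle law\<close>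

definition sc_domain :: "complex set" where
  "sc_domain = {z. 0 < Im z} \<union> {z. 2 < Re z}"

lemma open_sc_domain: "open sc_domain"
  unfolding sc_domain_def by (intro open_Un open_halfspace_Im_gt open_halfspace_Re_gt)

lemma connected_sc_domain: "connected sc_domain"
proof -
  have "\<i> + 3 \<in> {z. 0 < Im z} \<inter> {z. 2 < Re z}" by simp
  then show ?thesis unfolding sc_domain_def
    by (intro connected_Un convex_connected convex_halfspace_Im_gt convex_halfspace_Re_gt) blast+
qed

lemma sc_domain_dist:
  assumes "z \<in> sc_domain"
  obtains c where "0 < c" and "\<And>t. \<bar>t\<bar> \<le> 2 \<Longrightarrow> c \<le> norm (z - of_real t)"
proof (cases "0 < Im z")
  case True
  have "Im z \<le> norm (z - of_real t)" for t
    using abs_Im_le_cmod[of "z - of_real t"] by simp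
  with True that show ?thesis by blast
next
  case False
  then have "2 < Re z" using assms by (auto simp: sc_domain_def)
  moreover have "Re z - 2 \<le> norm (z - of_real t)" if "\<bar>t\<bar> \<le> 2" for t
    using abs_Re_le_cmod[of "z - of_real t"] that by simp
  ultimately show ?thesis using that[of "Re z - 2"] by simp
qed

lemma cauchy_transform_semicircle:
  "cauchy_transform semicircle z = (\<integral>t. of_real (sc_density t) * (1 / (z - of_real t)) \<partial>lborel)"
  unfolding cauchy_transform_def semicircle_eq_density
  using integral_density[of "\<lambda>t. 1 / (z - of_real t)" lborel sc_density]
  by (simp add: sc_density_nonneg scaleR_conv_of_real)

lemma integrable_sc_density_cauchy_kernel:
  assumes "z \<in> sc_domain"
  shows "integrable lborel (\<lambda>t. of_real (sc_density t) * (1 / (z - of_real t)))"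
proof -
  obtain c where c: "0 < c" "\<And>t. \<bar>t\<bar> \<le> 2 \<Longrightarrow> c \<le> norm (z - of_real t)"
    using sc_domain_dist[OF assms] by blast
  have bound: "norm (of_real (sc_density t) * (1 / (z - of_real t))) \<le> norm (sc_density t / c)" for t
  proof (cases "\<bar>t\<bar> < 2")
    case True
    then have "c \<le> norm (z - of_real t)" using c(2) by simp
    then have "sc_density t / norm (z - of_real t) \<le> sc_density t / c"
      using c(1) sc_density_nonneg[of t] by (intro divide_left_mono mult_pos_pos) auto
    then show ?thesis using c(1) sc_density_nonneg[of t] by (simp add: norm_mult norm_divide)
  next
    case False
    then have "sc_density t = 0" by (simp add: sc_density_eq_0_iff)
    then show ?thesis by simp
  qed
  show ?thesis
  proof (rule Bochner_Integration.integrable_bound)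
    show "integrable lborel (\<lambda>t. sc_density t / c)" using sc_density_integral(1) by simp
    show "AE t in lborel. norm (of_real (sc_density t) * (1 / (z - of_real t))) \<le> norm (sc_density t / c)"
      using bound by simp
  qed measurable
qed

lemma cauchy_transform_semicircle_interval:
  assumes "z \<in> sc_domain"
  shows "cauchy_transform semicircle z
    = integral (cbox (-2) 2) (\<lambda>t. of_real (sqrt (4 - t\<^sup>2) / (2 * pi)) / (z - of_real t))"
proof -
  have "cauchy_transform semicircle z = integral UNIV (\<lambda>t. of_real (sc_density t) * (1 / (z - of_real t)))"
    unfolding cauchy_transform_semicircle
    by (rule integral_lborel[OF integrable_sc_density_cauchy_kernel[OF assms], symmetric])
  also have "(\<lambda>t. of_real (sc_density t) * (1 / (z - of_real t)))
      = (\<lambda>t. if t \<in> {-2..2} then of_real (sqrt (4 - t\<^sup>2) / (2 * pi)) / (z - of_real t) else 0)"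
    by (auto simp: fun_eq_iff sc_density_def)
  finally show ?thesis by (simp only: integral_restrict_UNIV cbox_interval)
qed

lemma holomorphic_cauchy_transform_semicircle_convex:
  assumes U: "convex U" "U \<subseteq> sc_domain"
  shows "cauchy_transform semicircle holomorphic_on U"
proof -
  define f where "f t = complex_of_real (sqrt (4 - t\<^sup>2) / (2 * pi))" for t
  have nz: "z - of_real t \<noteq> 0" if "z \<in> U" "t \<in> cbox (-2) 2" for z t
  proof -
    have "z \<in> sc_domain" using that(1) U(2) by blast
    then obtain c where "0 < c" "\<And>t. \<bar>t\<bar> \<le> 2 \<Longrightarrow> c \<le> norm (z - of_real t)"
      using sc_domain_dist by blast
    moreover have "\<bar>t\<bar> \<le> 2" using that(2) by auto
    ultimately have "0 < norm (z - of_real t)" by (meson less_le_trans)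
    then show ?thesis by simp
  qed
  have "(\<lambda>z. integral (cbox (-2) 2) (\<lambda>t. f t / (z - of_real t))) holomorphic_on U"
  proof (rule leibniz_rule_holomorphic[where fx = "\<lambda>z t. - f t / (z - of_real t)\<^sup>2"])
    fix z t assume "z \<in> U" "t \<in> cbox (-2::real) 2"
    then show "((\<lambda>z. f t / (z - of_real t)) has_field_derivative - f t / (z - of_real t)\<^sup>2) (at z within U)"
      using nz by (auto intro!: derivative_eq_intros simp: power2_eq_square)
  next
    fix z assume "z \<in> U"
    then show "(\<lambda>t. f t / (z - of_real t)) integrable_on cbox (-2) 2"
      unfolding f_def using nz by (intro integrable_continuous continuous_intros) auto
  next
    show "continuous_on (U \<times> cbox (-2) 2) (\<lambda>(z, t). - f t / (z - of_real t)\<^sup>2)"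
      unfolding f_def case_prod_beta using nz by (intro continuous_intros) auto
  qed (rule U)
  then show ?thesis
  proof (rule holomorphic_transform)
    fix z assume "z \<in> U"
    then have "z \<in> sc_domain" using U(2) by blast
    then show "integral (cbox (-2) 2) (\<lambda>t. f t / (z - of_real t)) = cauchy_transform semicircle z"
      unfolding f_def by (rule cauchy_transform_semicircle_interval[symmetric])
  qed
qed

lemma holomorphic_cauchy_transform_semicircle: "cauchy_transform semicircle holomorphic_on sc_domain"
  unfolding sc_domain_def
  by (intro holomorphic_on_Un holomorphic_cauchy_transform_semicircle_convex convex_halfspace_Im_gt
      convex_halfspace_Re_gt open_halfspace_Im_gt open_halfspace_Re_gt) (auto simp: sc_domain_def)

lemma cauchy_transform_semicircle_real:
  assumes "2 \<le> \<bar>w\<bar>"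
  shows "cauchy_transform semicircle (of_real w) = of_real (sc_G_real w)"
proof -
  have "cauchy_transform semicircle (of_real w) = (\<integral>t. of_real (sc_density t / (w - t)) \<partial>lborel)"
    unfolding cauchy_transform_semicircle by (intro Bochner_Integration.integral_cong) auto
  also have "\<dots> = of_real (\<integral>t. sc_density t / (w - t) \<partial>lborel)"
    by (rule integral_complex_of_real)
  finally show ?thesis using sc_density_div_integral[OF assms] by simp
qed

lemma islimpt_of_real_greaterThan: "complex_of_real b islimpt of_real ` {a<..}" if "a < b"
proof (rule islimpt_approachable[THEN iffD2], intro allI impI)
  fix e :: real assume "0 < e"
  have "of_real (b + e/2) \<in> of_real ` {a<..}" using that \<open>0 < e\<close> by (intro imageI) simp
  moreover have "of_real (b + e/2) \<noteq> complex_of_real b \<and> dist (complex_of_real (b + e/2)) (of_real b) < e"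
    using \<open>0 < e\<close> by (simp add: dist_norm)
  ultimately show "\<exists>x'\<in>of_real ` {a<..}. x' \<noteq> complex_of_real b \<and> dist x' (of_real b) < e"
    by blast
qed

lemma cauchy_transform_semicircle_quadratic:
  assumes "z \<in> sc_domain"
  shows "(cauchy_transform semicircle z)\<^sup>2 - z * cauchy_transform semicircle z + 1 = 0"
proof (rule analytic_continuation[where f = "\<lambda>z. (cauchy_transform semicircle z)\<^sup>2 - z * cauchy_transform semicircle z + 1"
      and S = sc_domain and U = "of_real ` {2<..}" and \<xi> = "of_real 3"])
  show "(\<lambda>z. (cauchy_transform semicircle z)\<^sup>2 - z * cauchy_transform semicircle z + 1) holomorphic_on sc_domain"
    using holomorphic_cauchy_transform_semicircle by (intro holomorphic_intros)
next
  fix u :: complex assume "u \<in> of_real ` {2<..}"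
  then obtain w where w: "2 < w" "u = of_real w" by auto
  then have "cauchy_transform semicircle u = of_real (sc_G_real w)"
    using cauchy_transform_semicircle_real[of w] by simp
  moreover have "complex_of_real ((sc_G_real w)\<^sup>2 - w * sc_G_real w + 1) = 0"
    using sc_G_real_quadratic[OF w(1)] by simp
  ultimately show "(cauchy_transform semicircle u)\<^sup>2 - u * cauchy_transform semicircle u + 1 = 0"
    using w by simp
qed (use assms open_sc_domain connected_sc_domain islimpt_of_real_greaterThan[of 2 3]
     in \<open>auto simp: sc_domain_def\<close>)

lemma cauchy_transform_semicircle_upper:
  assumes z: "0 < Im z"
  defines "g \<equiv> cauchy_transform semicircle z"
  shows "g \<noteq> 0" and "Im g \<noteq> 0" and "z = g + 1 / g"
    and "recip_cauchy semicircle z = z - g"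
proof -
  have quad: "g\<^sup>2 - z * g + 1 = 0"
    unfolding g_def using cauchy_transform_semicircle_quadratic z by (simp add: sc_domain_def)
  then show g0: "g \<noteq> 0" by auto
  show zg: "z = g + 1 / g" using quad g0 by (simp add: field_simps power2_eq_square)
  show "Im g \<noteq> 0"
  proof
    assume "Im g = 0"
    then have "g = of_real (Re g)" by (simp add: complex_eq_iff)
    then have "Im (g + 1 / g) = 0" by (metis Im_complex_of_real of_real_add of_real_divide of_real_1)
    then show False using zg z by simp
  qed
  show "recip_cauchy semicircle z = z - g"
    unfolding recip_cauchy_def g_def[symmetric] using zg g0 by (simp add: field_simps)
qed

section \<open>The laws with reciprocal Cauchy transform \<open>H\<^sub>\<nu>(z) - x\<close>\<close>

definition sc_kernel_density :: "real \<Rightarrow> real \<Rightarrow> real" where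
  "sc_kernel_density x t = sc_density t / (1 - t * x + x\<^sup>2)"

definition sc_kernel_atom :: "real \<Rightarrow> real" where
  "sc_kernel_atom x = (if 1 < \<bar>x\<bar> then 1 - 1 / x\<^sup>2 else 0)"

lemma borel_measurable_sc_kernel_density[measurable]:
  assumes [measurable]: "f \<in> borel_measurable M" "g \<in> borel_measurable M"
  shows "(\<lambda>p. sc_kernel_density (f p) (g p)) \<in> borel_measurable M"
  unfolding sc_kernel_density_def by measurable

lemma borel_measurable_sc_kernel_atom[measurable]: "sc_kernel_atom \<in> borel_measurable borel"
  unfolding sc_kernel_atom_def by measurable

lemma sc_kernel_denominator_pos:
  assumes "\<bar>t\<bar> < 2" shows "0 < 1 - t * x + (x::real)\<^sup>2"
proof (cases "x = 0")
  case False
  have "t * x \<le> \<bar>t\<bar> * \<bar>x\<bar>" by (simp add: abs_mult[symmetric])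
  also have "\<dots> < 2 * \<bar>x\<bar>" using assms False by (intro mult_strict_right_mono) auto
  finally have "t * x < 2 * \<bar>x\<bar>" .
  moreover have "0 \<le> (1 - \<bar>x\<bar>)\<^sup>2" by simp
  then have "0 \<le> 1 - 2 * \<bar>x\<bar> + x\<^sup>2" by (simp add: power2_eq_square algebra_simps)
  ultimately show ?thesis by linarith
qed simp

lemma sc_kernel_density_pos: "\<bar>t\<bar> < 2 \<Longrightarrow> 0 < sc_kernel_density x t"
  unfolding sc_kernel_density_def using sc_density_pos_iff sc_kernel_denominator_pos by simp

lemma sc_kernel_density_eq_0: "2 \<le> \<bar>t\<bar> \<Longrightarrow> sc_kernel_density x t = 0"
  by (simp add: sc_kernel_density_def sc_density_eq_0_iff)

lemma sc_kernel_density_nonneg: "0 \<le> sc_kernel_density x t"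
  using sc_kernel_density_pos[of t x] sc_kernel_density_eq_0[of t x] by (cases "\<bar>t\<bar> < 2") auto

lemma sc_kernel_atom_nonneg: "0 \<le> sc_kernel_atom x"
proof (cases "1 < \<bar>x\<bar>")
  case True
  then have "1 < x\<^sup>2" using power_strict_mono[of 1 "\<bar>x\<bar>" 2] by simp
  then show ?thesis using True by (simp add: sc_kernel_atom_def)
qed (simp add: sc_kernel_atom_def)

lemma sc_kernel_atom_le_1: "sc_kernel_atom x \<le> 1"
  by (simp add: sc_kernel_atom_def)

lemma sc_kernel_density_joukowski:
  "x \<noteq> 0 \<Longrightarrow> sc_kernel_density x t = sc_density t / (x * (joukowski x - t))"
proof -
  assume "x \<noteq> 0"
  then have "1 - t * x + x\<^sup>2 = x * (joukowski x - t)"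
    by (simp add: joukowski_def field_simps power2_eq_square)
  then show ?thesis by (simp add: sc_kernel_density_def)
qed

lemma sc_kernel_density_integral:
  shows "integrable lborel (sc_kernel_density x)"
    and "integral\<^sup>L lborel (sc_kernel_density x) = 1 - sc_kernel_atom x"
proof -
  have "integrable lborel (sc_kernel_density x) \<and>
      integral\<^sup>L lborel (sc_kernel_density x) = 1 - sc_kernel_atom x"
  proof (cases "x = 0")
    case True
    then have "sc_kernel_density x = sc_density" by (simp add: sc_kernel_density_def fun_eq_iff)
    then show ?thesis using sc_density_integral True by (simp add: sc_kernel_atom_def)
  next
    case False
    have eq: "sc_kernel_density x = (\<lambda>t. sc_density t / (joukowski x - t) / x)"
      using sc_kernel_density_joukowski[OF False] by (simp add: fun_eq_iff mult.commute)
    note int = sc_density_div_integral[OF abs_joukowski_ge_2[OF False]]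
    have "integral\<^sup>L lborel (sc_kernel_density x) = sc_G_real (joukowski x) / x"
      unfolding eq integral_divide_zero int(2) ..
    also have "\<dots> = 1 - sc_kernel_atom x"
      using False by (simp add: sc_G_real_joukowski sc_kernel_atom_def power2_eq_square)
    finally show ?thesis unfolding eq using integrable_divide_zero[OF int(1)] by blast
  qed
  then show "integrable lborel (sc_kernel_density x)"
    and "integral\<^sup>L lborel (sc_kernel_density x) = 1 - sc_kernel_atom x" by auto
qed

lemma sc_kernel_density_nn_integral:
  "(\<integral>\<^sup>+t. ennreal (sc_kernel_density x t) \<partial>lborel) = ennreal (1 - sc_kernel_atom x)"
  using nn_integral_eq_integral[OF sc_kernel_density_integral(1)] sc_kernel_density_integral(2)
    sc_kernel_density_nonneg by simp

lemma sc_G_real_joukowski_add_atom: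
  "x \<noteq> 0 \<Longrightarrow> sc_G_real (joukowski x) + x * sc_kernel_atom x = x"
  by (simp add: sc_G_real_joukowski sc_kernel_atom_def power2_eq_square field_simps)

lemma partial_fractions_field:
  fixes s x w t z :: "'a::field"
  assumes "x \<noteq> 0" "w \<noteq> t" "z \<noteq> t" "z \<noteq> w"
  shows "s / (x * (w - t)) * (1 / (z - t)) = 1 / (x * (z - w)) * (s / (w - t) - s * (1 / (z - t)))"
proof -
  define a b where "a = w - t" and "b = z - t"
  have "a \<noteq> 0" "b \<noteq> 0" "b - a \<noteq> 0" using assms by (auto simp: a_def b_def)
  moreover have "z - w = b - a" by (simp add: a_def b_def)
  ultimately show ?thesis using assms(1) unfolding a_def[symmetric] b_def[symmetric] \<open>z - w = b - a\<close>
    by (simp add: field_simps)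
qed

lemma integrable_sc_kernel_density_cauchy:
  assumes z: "0 < Im z"
  shows "integrable lborel (\<lambda>t. of_real (sc_kernel_density x t) * (1 / (z - of_real t)))"
proof (rule Bochner_Integration.integrable_bound)
  show "integrable lborel (\<lambda>t. sc_kernel_density x t / Im z)"
    using sc_kernel_density_integral(1) by simp
  have "norm (of_real (sc_kernel_density x t) * (1 / (z - of_real t))) \<le> norm (sc_kernel_density x t / Im z)" for t
  proof -
    have "Im z \<le> norm (z - of_real t)" using abs_Im_le_cmod[of "z - of_real t"] z by simp
    then have "sc_kernel_density x t / norm (z - of_real t) \<le> sc_kernel_density x t / Im z"
      using z sc_kernel_density_nonneg[of x t] by (intro divide_left_mono mult_pos_pos) auto
    then show ?thesis using z sc_kernel_density_nonneg[of x t] by (simp add: norm_mult norm_divide)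
  qed
  then show "AE t in lborel. norm (of_real (sc_kernel_density x t) * (1 / (z - of_real t)))
      \<le> norm (sc_kernel_density x t / Im z)" by simp
qed measurable

lemma cauchy_integral_sc_kernel_density:
  assumes z: "0 < Im z" and x: "x \<noteq> 0"
  shows "(\<integral>t. of_real (sc_kernel_density x t) * (1 / (z - of_real t)) \<partial>lborel)
    = (of_real (sc_G_real (joukowski x)) - cauchy_transform semicircle z) / (of_real x * (z - of_real (joukowski x)))"
proof -
  define c where "c = 1 / (of_real x * (z - of_real (joukowski x)))"
  have partial_fractions: "of_real (sc_kernel_density x t) * (1 / (z - of_real t))
      = c * (of_real (sc_density t / (joukowski x - t)) - of_real (sc_density t) * (1 / (z - of_real t)))" for t
  proof (cases "\<bar>t\<bar> < 2")
    case True
    then have "joukowski x \<noteq> t" using abs_joukowski_ge_2[OF x] by auto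
    have "z \<noteq> of_real t" "z \<noteq> of_real (joukowski x)" using z by auto
    have "of_real (sc_kernel_density x t) * (1 / (z - of_real t))
      = of_real (sc_density t) / (of_real x * (of_real (joukowski x) - of_real t)) * (1 / (z - of_real t))"
      using sc_kernel_density_joukowski[OF x] by simp
    also have "\<dots> = c * (of_real (sc_density t) / (of_real (joukowski x) - of_real t)
        - of_real (sc_density t) * (1 / (z - of_real t)))"
      unfolding c_def using x \<open>joukowski x \<noteq> t\<close> \<open>z \<noteq> of_real t\<close> \<open>z \<noteq> of_real (joukowski x)\<close>
      by (intro partial_fractions_field) auto
    finally show ?thesis by simp
  qed (simp add: sc_kernel_density_eq_0 sc_density_eq_0_iff)
  have "(\<integral>t. complex_of_real (sc_density t / (joukowski x - t)) \<partial>lborel)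
      = of_real (sc_G_real (joukowski x))"
    unfolding integral_complex_of_real sc_density_div_integral(2)[OF abs_joukowski_ge_2[OF x]] ..
  moreover have "integrable lborel (\<lambda>t. complex_of_real (sc_density t / (joukowski x - t)))"
    using sc_density_div_integral(1)[OF abs_joukowski_ge_2[OF x]] by (rule integrable_of_real)
  moreover have "integrable lborel (\<lambda>t. of_real (sc_density t) * (1 / (z - of_real t)))"
    using integrable_sc_density_cauchy_kernel z by (simp add: sc_domain_def)
  ultimately show ?thesis
    unfolding partial_fractions cauchy_transform_semicircle by (simp add: c_def)
qed

lemma joukowski_resolvent_identity:
  fixes g x :: "'a::field"
  assumes "g \<noteq> 0" "x \<noteq> 0" "g \<noteq> x" "g * x \<noteq> 1"
  shows "(x - g) / (x * ((g + 1/g) - (x + 1/x))) = 1 / ((g + 1/g) - g - x)"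
proof -
  define a b where "a = g - x" and "b = g * x - 1"
  have "a \<noteq> 0" "b \<noteq> 0" using assms by (auto simp: a_def b_def)
  have e: "(g + 1/g) - (x + 1/x) = a * b / (g * x)" "x - g = - a" "(g + 1/g) - g - x = - b / g"
    using assms(1,2) by (simp_all add: a_def b_def field_simps)
  show ?thesis
    unfolding e using \<open>a \<noteq> 0\<close> \<open>b \<noteq> 0\<close> assms(1,2) by (simp add: field_simps)
qed

lemma cauchy_transform_sc_kernel_law:
  assumes z: "0 < Im z"
  shows "(\<integral>t. of_real (sc_kernel_density x t) * (1 / (z - of_real t)) \<partial>lborel)
      + of_real (sc_kernel_atom x) / (z - of_real (joukowski x))
    = 1 / (z - cauchy_transform semicircle z - of_real x)"
proof -
  define g where "g = cauchy_transform semicircle z"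
  have g: "g \<noteq> 0" "Im g \<noteq> 0" "z = g + 1 / g"
    using cauchy_transform_semicircle_upper[OF z] by (simp_all add: g_def)
  show ?thesis
  proof (cases "x = 0")
    case True
    then have "sc_kernel_density x = sc_density" by (simp add: sc_kernel_density_def fun_eq_iff)
    then have "(\<integral>t. of_real (sc_kernel_density x t) * (1 / (z - of_real t)) \<partial>lborel) = g"
      by (simp add: g_def cauchy_transform_semicircle)
    moreover have "z - g - of_real x = 1 / g" using True g(3) by simp
    ultimately show ?thesis using True g(1) by (simp add: sc_kernel_atom_def g_def[symmetric])
  next
    case False
    have gx: "g \<noteq> of_real x" "g * of_real x \<noteq> 1" using g(2) False by (auto simp: complex_eq_iff)
    define D where "D = z - of_real (joukowski x)"
    have "D \<noteq> 0" using z by (auto simp: D_def)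
    have "of_real (sc_G_real (joukowski x)) + of_real x * of_real (sc_kernel_atom x) = complex_of_real x"
      using sc_G_real_joukowski_add_atom[OF False] by (metis of_real_add of_real_mult)
    then have "(of_real (sc_G_real (joukowski x)) - g) / (of_real x * D) + of_real (sc_kernel_atom x) / D
      = (of_real x - g) / (of_real x * D)"
      using False \<open>D \<noteq> 0\<close> by (simp add: field_simps)
    also have "\<dots> = 1 / (z - g - of_real x)"
      using joukowski_resolvent_identity[OF g(1) _ gx] False
      unfolding D_def g(3)[symmetric] by (simp add: joukowski_def)
    finally show ?thesis
      unfolding cauchy_integral_sc_kernel_density[OF z False] D_def g_def .
  qed
qed

section \<open>An explicit model of \<open>\<mu> \<rhd> \<nu>\<close>\<close>

text \<open>To write the mixture of the laws \<open>\<rho>\<^sub>x\<close> over \<open>x \<sim> \<mu>\<close> as a single pushforward of a density on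
  \<open>\<mu> \<Otimes> lborel\<close>, the atom of \<open>\<rho>\<^sub>x\<close> is first spread uniformly over the unit interval \<open>{3..4}\<close>
  (where \<open>sc_kernel_density x\<close> vanishes) and then collapsed onto \<open>joukowski x\<close>.\<close>

definition sc_mix_density :: "real \<Rightarrow> real \<Rightarrow> real" where
  "sc_mix_density x u = sc_kernel_density x u + indicator {3..4} u * sc_kernel_atom x"

definition sc_mix_map :: "real \<Rightarrow> real \<Rightarrow> real" where
  "sc_mix_map x u = (if u \<in> {3..4} then joukowski x else u)"

definition sc_mconv :: "real measure \<Rightarrow> real measure" where
  "sc_mconv \<mu> = distr (density (\<mu> \<Otimes>\<^sub>M lborel) (\<lambda>p. ennreal (sc_mix_density (fst p) (snd p))))
     borel (\<lambda>p. sc_mix_map (fst p) (snd p))"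

lemma borel_measurable_joukowski[measurable]: "joukowski \<in> borel_measurable borel"
  unfolding joukowski_def by measurable

lemma borel_measurable_sc_mix_density[measurable]:
  assumes [measurable]: "f \<in> borel_measurable M" "g \<in> borel_measurable M"
  shows "(\<lambda>p. sc_mix_density (f p) (g p)) \<in> borel_measurable M"
  unfolding sc_mix_density_def by measurable

lemma borel_measurable_sc_mix_map[measurable]:
  assumes [measurable]: "f \<in> borel_measurable M" "g \<in> borel_measurable M"
  shows "(\<lambda>p. sc_mix_map (f p) (g p)) \<in> borel_measurable M"
  unfolding sc_mix_map_def by measurable

lemma sc_mix_density_nonneg: "0 \<le> sc_mix_density x u"
  unfolding sc_mix_density_def using sc_kernel_density_nonneg[of x u] sc_kernel_atom_nonneg[of x]
  by simp

lemma sc_mix_cases: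
  "u \<in> {3..4} \<Longrightarrow> sc_mix_density x u = sc_kernel_atom x \<and> sc_mix_map x u = joukowski x"
  "u \<notin> {3..4} \<Longrightarrow> sc_mix_density x u = sc_kernel_density x u \<and> sc_mix_map x u = u"
  by (auto simp: sc_mix_density_def sc_mix_map_def sc_kernel_density_eq_0)

lemma nn_integral_sc_mix:
  assumes [measurable]: "f \<in> borel_measurable borel"
  shows "(\<integral>\<^sup>+u. ennreal (sc_mix_density x u) * f (sc_mix_map x u) \<partial>lborel)
    = (\<integral>\<^sup>+u. ennreal (sc_kernel_density x u) * f u \<partial>lborel) + ennreal (sc_kernel_atom x) * f (joukowski x)"
proof -
  have "ennreal (sc_mix_density x u) * f (sc_mix_map x u)
      = ennreal (sc_kernel_density x u) * f u + indicator {3..4} u * (ennreal (sc_kernel_atom x) * f (joukowski x))" for u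
    using sc_mix_cases[of u x] by (cases "u \<in> {3..4}") (auto simp: sc_kernel_density_eq_0)
  then show ?thesis
    by (simp add: nn_integral_add nn_integral_cmult_indicator mult.commute)
qed

lemma integral_sc_mix_cauchy:
  assumes z: "0 < Im z"
  shows "integrable lborel (\<lambda>u. of_real (sc_mix_density x u) * (1 / (z - of_real (sc_mix_map x u))))"
    and "(\<integral>u. of_real (sc_mix_density x u) * (1 / (z - of_real (sc_mix_map x u))) \<partial>lborel)
      = 1 / (z - cauchy_transform semicircle z - of_real x)"
proof -
  let ?c = "of_real (sc_kernel_atom x) * (1 / (z - of_real (joukowski x)))"
  have eq: "(\<lambda>u. of_real (sc_mix_density x u) * (1 / (z - of_real (sc_mix_map x u))))
      = (\<lambda>u. of_real (sc_kernel_density x u) * (1 / (z - of_real u)) + indicator {3..4} u *\<^sub>R ?c)"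
    using sc_mix_cases by (auto simp: fun_eq_iff sc_kernel_density_eq_0 indicator_def)
  have int: "integrable lborel (\<lambda>u. indicator {3..4::real} u *\<^sub>R ?c)"
    by (intro integrable_scaleR_left integrable_real_indicator) auto
  show "integrable lborel (\<lambda>u. of_real (sc_mix_density x u) * (1 / (z - of_real (sc_mix_map x u))))"
    unfolding eq using integrable_sc_kernel_density_cauchy[OF z] int by auto
  show "(\<integral>u. of_real (sc_mix_density x u) * (1 / (z - of_real (sc_mix_map x u))) \<partial>lborel)
      = 1 / (z - cauchy_transform semicircle z - of_real x)"
    unfolding eq using integrable_sc_kernel_density_cauchy[OF z] int cauchy_transform_sc_kernel_law[OF z]
    by simp
qed

lemma sets_sc_mconv[simp, measurable_cong]: "sets (sc_mconv \<mu>) = sets borel"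
  unfolding sc_mconv_def by simp

context
  fixes \<mu> :: "real measure"
  assumes prob: "prob_space \<mu>" and sets_\<mu>[measurable_cong]: "sets \<mu> = sets borel"
begin

interpretation \<mu>: prob_space \<mu> by (rule prob)

interpretation pair_sigma_finite \<mu> lborel
  by (simp add: pair_sigma_finite_def lborel.sigma_finite_measure_axioms \<mu>.sigma_finite_measure_axioms)

lemma nn_integral_sc_mconv_pair:
  assumes [measurable]: "f \<in> borel_measurable borel"
  shows "(\<integral>\<^sup>+y. f y \<partial>sc_mconv \<mu>)
    = (\<integral>\<^sup>+p. ennreal (sc_mix_density (fst p) (snd p)) * f (sc_mix_map (fst p) (snd p)) \<partial>(\<mu> \<Otimes>\<^sub>M lborel))"
  unfolding sc_mconv_def by (simp add: nn_integral_distr nn_integral_density)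

lemma nn_integral_sc_mconv:
  assumes [measurable]: "f \<in> borel_measurable borel"
  shows "(\<integral>\<^sup>+y. f y \<partial>sc_mconv \<mu>)
    = (\<integral>\<^sup>+x. (\<integral>\<^sup>+u. ennreal (sc_kernel_density x u) * f u \<partial>lborel)
        + ennreal (sc_kernel_atom x) * f (joukowski x) \<partial>\<mu>)"
proof -
  have "(\<integral>\<^sup>+y. f y \<partial>sc_mconv \<mu>)
      = (\<integral>\<^sup>+p. ennreal (sc_mix_density (fst p) (snd p)) * f (sc_mix_map (fst p) (snd p)) \<partial>(\<mu> \<Otimes>\<^sub>M lborel))"
    by (rule nn_integral_sc_mconv_pair) simp
  also have "\<dots> = (\<integral>\<^sup>+x. \<integral>\<^sup>+u. ennreal (sc_mix_density x u) * f (sc_mix_map x u) \<partial>lborel \<partial>\<mu>)"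
    using lborel.nn_integral_fst[of "\<lambda>p. ennreal (sc_mix_density (fst p) (snd p)) * f (sc_mix_map (fst p) (snd p))"]
    by simp
  finally show ?thesis by (simp add: nn_integral_sc_mix)
qed

lemma emeasure_sc_mconv:
  assumes [measurable]: "A \<in> sets borel"
  shows "emeasure (sc_mconv \<mu>) A
    = (\<integral>\<^sup>+x. (\<integral>\<^sup>+u. ennreal (sc_kernel_density x u) * indicator A u \<partial>lborel)
        + ennreal (sc_kernel_atom x) * indicator A (joukowski x) \<partial>\<mu>)" (is "_ = ?rhs")
proof -
  have "emeasure (sc_mconv \<mu>) A = (\<integral>\<^sup>+y. indicator A y \<partial>sc_mconv \<mu>)"
    by (simp add: nn_integral_indicator)
  also have "\<dots> = ?rhs"
    by (rule nn_integral_sc_mconv) simp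
  finally show ?thesis .
qed

lemma prob_space_sc_mconv: "prob_space (sc_mconv \<mu>)"
proof (rule prob_spaceI)
  have "(\<integral>\<^sup>+u. ennreal (sc_kernel_density x u) \<partial>lborel) + ennreal (sc_kernel_atom x) = 1" for x
  proof -
    have "ennreal (1 - sc_kernel_atom x + sc_kernel_atom x) = ennreal (1 - sc_kernel_atom x) + ennreal (sc_kernel_atom x)"
      using sc_kernel_atom_nonneg[of x] sc_kernel_atom_le_1[of x] by (intro ennreal_plus) auto
    then show ?thesis using sc_kernel_density_nn_integral[of x] by simp
  qed
  then have "emeasure (sc_mconv \<mu>) UNIV = emeasure \<mu> (space \<mu>)"
    using emeasure_sc_mconv[of UNIV] by simp
  then show "emeasure (sc_mconv \<mu>) (space (sc_mconv \<mu>)) = 1"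
    using \<mu>.emeasure_space_1 sets_eq_imp_space_eq[OF sets_sc_mconv[of \<mu>]] by simp
qed

lemma cauchy_transform_sc_mconv:
  assumes z: "0 < Im z"
  shows "cauchy_transform (sc_mconv \<mu>) z = cauchy_transform \<mu> (z - cauchy_transform semicircle z)"
proof -
  let ?g = "\<lambda>y::real. 1 / (z - complex_of_real y)"
  let ?F = "\<lambda>p. complex_of_real (sc_mix_density (fst p) (snd p)) * ?g (sc_mix_map (fst p) (snd p))"
  have "norm (?g y) \<le> 1 / Im z" for y
    using abs_Im_le_cmod[of "z - of_real y"] z by (simp add: norm_divide divide_le_eq_1 field_simps)
  then have "norm (?F p) \<le> sc_mix_density (fst p) (snd p) * (1 / Im z)" for p
    unfolding norm_mult norm_of_real abs_of_nonneg[OF sc_mix_density_nonneg]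
    by (intro mult_left_mono sc_mix_density_nonneg)
  then have "ennreal (norm (?F p)) \<le> ennreal (sc_mix_density (fst p) (snd p)) * ennreal (1 / Im z)" for p
    by (subst ennreal_mult'[symmetric]) (auto intro: ennreal_leI sc_mix_density_nonneg)
  then have "(\<integral>\<^sup>+p. ennreal (norm (?F p)) \<partial>(\<mu> \<Otimes>\<^sub>M lborel))
      \<le> (\<integral>\<^sup>+p. ennreal (sc_mix_density (fst p) (snd p)) * ennreal (1 / Im z) \<partial>(\<mu> \<Otimes>\<^sub>M lborel))"
    by (rule nn_integral_mono)
  also have "\<dots> = (\<integral>\<^sup>+p. ennreal (sc_mix_density (fst p) (snd p)) \<partial>(\<mu> \<Otimes>\<^sub>M lborel)) * ennreal (1 / Im z)"
    by (rule nn_integral_multc) measurable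
  also have "(\<integral>\<^sup>+p. ennreal (sc_mix_density (fst p) (snd p)) \<partial>(\<mu> \<Otimes>\<^sub>M lborel)) = (\<integral>\<^sup>+y. 1 \<partial>sc_mconv \<mu>)"
    using nn_integral_sc_mconv_pair[of "\<lambda>_. 1"] by simp
  also have "\<dots> = 1"
    using prob_space.emeasure_space_1[OF prob_space_sc_mconv] by simp
  finally have "(\<integral>\<^sup>+p. ennreal (norm (?F p)) \<partial>(\<mu> \<Otimes>\<^sub>M lborel)) < \<infinity>"
    using ennreal_less_top[of "1 / Im z"] unfolding mult_1 infinity_ennreal_def by (rule order.strict_trans1)
  then have int: "integrable (\<mu> \<Otimes>\<^sub>M lborel) ?F"
    by (intro integrableI_bounded) measurable
  have "cauchy_transform (sc_mconv \<mu>) z = integral\<^sup>L (\<mu> \<Otimes>\<^sub>M lborel) ?F"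
    unfolding cauchy_transform_def sc_mconv_def
    by (simp add: integral_distr integral_density sc_mix_density_nonneg scaleR_conv_of_real)
  also have "\<dots> = (\<integral>x. (\<integral>u. ?F (x, u) \<partial>lborel) \<partial>\<mu>)"
    by (rule integral_fst'[OF int, symmetric])
  also have "\<dots> = cauchy_transform \<mu> (z - cauchy_transform semicircle z)"
    unfolding cauchy_transform_def[of \<mu>] using integral_sc_mix_cauchy(2)[OF z] by simp
  finally show ?thesis .
qed

end

section \<open>Stieltjes inversion\<close>

lemma tendsto_arctan_mult_Suc: "(\<lambda>n::nat. arctan (y * real (Suc n))) \<longlonglongrightarrow> pi / 2 * sgn y"
proof -
  have pos: "(\<lambda>n::nat. arctan (c * real (Suc n))) \<longlonglongrightarrow> pi / 2" if "0 < c" for c :: real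
  proof -
    have "filterlim (\<lambda>n::nat. real (Suc n)) at_top sequentially"
      using filterlim_sequentially_Suc[of "\<lambda>n. real n" at_top] filterlim_real_sequentially by simp
    then have "filterlim (\<lambda>n::nat. c * real (Suc n)) at_top sequentially"
      by (rule filterlim_tendsto_pos_mult_at_top[OF tendsto_const that])
    then show ?thesis by (rule filterlim_compose[OF tendsto_arctan_at_top])
  qed
  consider "0 < y" | "y = 0" | "y < 0" by linarith
  then show ?thesis
  proof cases
    case 3
    then have "(\<lambda>n::nat. - arctan ((-y) * real (Suc n))) \<longlonglongrightarrow> - (pi / 2)"
      using pos[of "-y"] by (intro tendsto_minus) auto
    then show ?thesis using 3 by (simp add: arctan_minus)
  qed (use pos in auto)
qed

definition poisson_window :: "real \<Rightarrow> real \<Rightarrow> real \<Rightarrow> real \<Rightarrow> real" where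
  "poisson_window a b s x = (arctan ((b - x) / s) - arctan ((a - x) / s)) / pi"

definition sgn_window :: "real \<Rightarrow> real \<Rightarrow> real \<Rightarrow> real" where
  "sgn_window a b x = (sgn (b - x) - sgn (a - x)) / 2"

lemma borel_measurable_poisson_window[measurable]: "poisson_window a b s \<in> borel_measurable borel"
  unfolding poisson_window_def by measurable

lemma borel_measurable_sgn_window[measurable]: "sgn_window a b \<in> borel_measurable borel"
  unfolding sgn_window_def by measurable

lemma abs_poisson_window_le_1: "\<bar>poisson_window a b s x\<bar> \<le> 1"
proof -
  have "\<bar>arctan ((b - x) / s) - arctan ((a - x) / s)\<bar> \<le> pi"
    using arctan_bounded[of "(b - x) / s"] arctan_bounded[of "(a - x) / s"] by linarith
  then show ?thesis by (simp add: poisson_window_def abs_divide)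
qed

lemma abs_sgn_window_le_1: "\<bar>sgn_window a b x\<bar> \<le> 1"
  unfolding sgn_window_def by (auto simp: sgn_if)

lemma poisson_window_tendsto:
  "(\<lambda>n::nat. poisson_window a b (1 / real (Suc n)) x) \<longlonglongrightarrow> sgn_window a b x"
proof -
  have "(\<lambda>n::nat. (arctan ((b - x) * real (Suc n)) - arctan ((a - x) * real (Suc n))) / pi)
      \<longlonglongrightarrow> (pi / 2 * sgn (b - x) - pi / 2 * sgn (a - x)) / pi"
    by (intro tendsto_intros tendsto_arctan_mult_Suc) simp
  moreover have "(pi / 2 * sgn (b - x) - pi / 2 * sgn (a - x)) / pi = sgn_window a b x"
    by (simp add: sgn_window_def field_simps)
  ultimately show ?thesis by (simp add: poisson_window_def)
qed

lemma sgn_window_shift_tendsto: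
  assumes "a \<le> b"
  shows "(\<lambda>n::nat. sgn_window (a + 1 / real (Suc n)) (b + 1 / real (Suc n)) x) \<longlonglongrightarrow> indicator {a<..b} x"
proof -
  have sgn_shift: "(\<lambda>n::nat. sgn (c + 1 / real (Suc n))) \<longlonglongrightarrow> (if 0 \<le> c then 1 else -1 :: real)" for c :: real
  proof (cases "0 \<le> c")
    case True
    then have "sgn (c + 1 / real (Suc n)) = 1" for n
      by (simp add: add_nonneg_pos)
    then show ?thesis using True by simp
  next
    case False
    have "(\<lambda>n::nat. 1 / real (Suc n)) \<longlonglongrightarrow> 0"
      using LIMSEQ_inverse_real_of_nat by (simp add: inverse_eq_divide)
    then have "eventually (\<lambda>n. 1 / real (Suc n) < -c) sequentially"
      using False by (intro order_tendstoD(2)) auto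
    then have "eventually (\<lambda>n. sgn (c + 1 / real (Suc n)) = -1) sequentially"
      by (rule eventually_mono) (simp add: sgn_if)
    then show ?thesis using False by (simp add: tendsto_eventually)
  qed
  have "(\<lambda>n::nat. (sgn ((b - x) + 1 / real (Suc n)) - sgn ((a - x) + 1 / real (Suc n))) / 2)
      \<longlonglongrightarrow> ((if 0 \<le> b - x then 1 else -1) - (if 0 \<le> a - x then 1 else -1)) / 2"
    by (intro tendsto_intros sgn_shift) simp
  moreover have "((if 0 \<le> b - x then 1 else -1) - (if 0 \<le> a - x then 1 else -1)) / 2 = (indicator {a<..b} x :: real)"
    using assms by (auto simp: indicator_def)
  ultimately show ?thesis by (simp add: sgn_window_def algebra_simps)
qed

lemma poisson_kernel_integral:
  assumes s: "0 < s" and ab: "a \<le> b"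
  shows "integrable lborel (\<lambda>t. indicator {a..b} t * (s / (pi * ((t - x)\<^sup>2 + s\<^sup>2))))"
    and "(\<integral>t. indicator {a..b} t * (s / (pi * ((t - x)\<^sup>2 + s\<^sup>2))) \<partial>lborel) = poisson_window a b s x"
proof -
  define F where "F t = arctan ((t - x) / s) / pi" for t
  have pos: "0 < (t - x)\<^sup>2 + s\<^sup>2" for t using s by (simp add: add_nonneg_pos)
  have "((\<lambda>t. s / (pi * ((t - x)\<^sup>2 + s\<^sup>2))) has_integral (F b - F a)) {a..b}"
  proof (rule fundamental_theorem_of_calculus_interior[OF ab])
    show "continuous_on {a..b} F" unfolding F_def by (intro continuous_intros) (use s in auto)
  next
    fix t
    have "(F has_real_derivative (inverse (1 + ((t - x) / s)\<^sup>2) * (1 / s)) / pi) (at t)"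
      unfolding F_def using s by (auto intro!: derivative_eq_intros DERIV_arctan)
    moreover have "1 + ((t - x) / s)\<^sup>2 = ((t - x)\<^sup>2 + s\<^sup>2) / s\<^sup>2"
      using s by (simp add: field_simps power2_eq_square)
    ultimately have "(F has_real_derivative s / (pi * ((t - x)\<^sup>2 + s\<^sup>2))) (at t)"
      using s pos[of t] by (simp add: field_simps power2_eq_square)
    then show "(F has_vector_derivative s / (pi * ((t - x)\<^sup>2 + s\<^sup>2))) (at t)"
      by (simp add: has_real_derivative_iff_has_vector_derivative)
  qed
  moreover have "\<And>t. 0 \<le> s / (pi * ((t - x)\<^sup>2 + s\<^sup>2))" using s pos by simp
  moreover have "(\<lambda>t. indicator {a..b} t * (s / (pi * ((t - x)\<^sup>2 + s\<^sup>2)))) \<in> borel_measurable borel"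
    by measurable
  ultimately show "integrable lborel (\<lambda>t. indicator {a..b} t * (s / (pi * ((t - x)\<^sup>2 + s\<^sup>2))))"
    and "(\<integral>t. indicator {a..b} t * (s / (pi * ((t - x)\<^sup>2 + s\<^sup>2))) \<partial>lborel) = poisson_window a b s x"
    using lborel_integral_indicator_eq_has_integral[of "\<lambda>t. s / (pi * ((t - x)\<^sup>2 + s\<^sup>2))" "F b - F a" a b]
    by (simp_all add: F_def poisson_window_def diff_divide_distrib)
qed

context
  fixes M :: "real measure"
  assumes finite: "finite_measure M" and sets_M[measurable_cong]: "sets M = sets borel"
begin

interpretation finite_measure M by (rule finite)

interpretation pair_sigma_finite M lborel
  by (simp add: pair_sigma_finite_def lborel.sigma_finite_measure_axioms sigma_finite_measure_axioms)

lemma Im_cauchy_transform: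
  assumes s: "0 < s"
  shows "Im (cauchy_transform M (Complex t s)) = - (\<integral>x. s / ((t - x)\<^sup>2 + s\<^sup>2) \<partial>M)"
proof -
  have "norm (1 / (Complex t s - of_real x)) \<le> 1 / s" for x
    using abs_Im_le_cmod[of "Complex t s - of_real x"] s by (simp add: norm_divide divide_le_eq_1 field_simps)
  then have "integrable M (\<lambda>x. 1 / (Complex t s - of_real x))"
    by (intro integrable_const_bound[where B = "1 / s"]) auto
  moreover have "Im (1 / (Complex t s - of_real x)) = - (s / ((t - x)\<^sup>2 + s\<^sup>2))" for x
  proof -
    have "Complex t s - of_real x = Complex (t - x) s" by (simp add: complex_eq_iff)
    then show ?thesis by (simp add: Im_divide power2_eq_square)
  qed
  ultimately show ?thesis
    unfolding cauchy_transform_def by (simp flip: integral_Im)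
qed

lemma integral_poisson_window:
  assumes s: "0 < s" and ab: "a \<le> b"
  shows "(\<integral>x. poisson_window a b s x \<partial>M)
    = (\<integral>t. indicator {a..b} t * (- Im (cauchy_transform M (Complex t s)) / pi) \<partial>lborel)"
proof -
  define F where "F x t = indicator {a..b} t * (s / (pi * ((t - x)\<^sup>2 + s\<^sup>2)))" for x t
  have F_bound: "\<bar>F x t\<bar> \<le> indicator {a..b} t * (1 / (pi * s))" for x t
  proof -
    have "s / (pi * ((t - x)\<^sup>2 + s\<^sup>2)) \<le> s / (pi * s\<^sup>2)"
      using s by (intro divide_left_mono mult_left_mono mult_pos_pos) (auto simp: add_nonneg_pos)
    moreover have "0 \<le> s / (pi * ((t - x)\<^sup>2 + s\<^sup>2))" using s by (simp add: add_nonneg_pos)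
    ultimately show ?thesis using s by (auto simp: F_def indicator_def power2_eq_square)
  qed
  have "(\<integral>\<^sup>+p. ennreal (norm (F (fst p) (snd p))) \<partial>(M \<Otimes>\<^sub>M lborel))
      \<le> (\<integral>\<^sup>+p. ennreal (1 / (pi * s)) * indicator {a..b} (snd p) \<partial>(M \<Otimes>\<^sub>M lborel))"
  proof (rule nn_integral_mono)
    fix p :: "real \<times> real"
    show "ennreal (norm (F (fst p) (snd p))) \<le> ennreal (1 / (pi * s)) * indicator {a..b} (snd p)"
      using F_bound[of "fst p" "snd p"] by (cases "snd p \<in> {a..b}") (auto intro: ennreal_leI)
  qed
  also have "\<dots> = (\<integral>\<^sup>+x. ennreal (1 / (pi * s)) * emeasure lborel {a..b} \<partial>M)"
    by (simp add: lborel.nn_integral_fst[symmetric] nn_integral_cmult_indicator)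
  also have "\<dots> < \<infinity>"
    using ab emeasure_finite[of "space M"] by (simp add: ennreal_mult_less_top less_top[symmetric] ennreal_mult_eq_top_iff)
  finally have "integrable (M \<Otimes>\<^sub>M lborel) (\<lambda>(x, t). F x t)"
    unfolding split_beta' by (intro integrableI_bounded) (auto simp: F_def)
  then have "(\<integral>x. (\<integral>t. F x t \<partial>lborel) \<partial>M) = (\<integral>t. (\<integral>x. F x t \<partial>M) \<partial>lborel)"
    using integral_fst integral_snd by metis
  moreover have "(\<integral>x. F x t \<partial>M) = indicator {a..b} t * (- Im (cauchy_transform M (Complex t s)) / pi)" for t
  proof -
    have "(\<lambda>x. F x t) = (\<lambda>x. (indicator {a..b} t / pi) * (s / ((t - x)\<^sup>2 + s\<^sup>2)))"
      using s by (auto simp: F_def fun_eq_iff field_simps add_nonneg_pos)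
    then have "(\<integral>x. F x t \<partial>M) = (indicator {a..b} t / pi) * (\<integral>x. s / ((t - x)\<^sup>2 + s\<^sup>2) \<partial>M)"
      by (simp only: integral_mult_right_zero)
    then show ?thesis using Im_cauchy_transform[OF s, of t] by simp
  qed
  ultimately show ?thesis
    using poisson_kernel_integral(2)[OF s ab] by (simp add: F_def)
qed

lemma integral_poisson_window_tendsto:
  "(\<lambda>n::nat. \<integral>x. poisson_window a b (1 / real (Suc n)) x \<partial>M) \<longlonglongrightarrow> (\<integral>x. sgn_window a b x \<partial>M)"
proof (rule integral_dominated_convergence[where w = "\<lambda>_. 1"])
  show "AE x in M. (\<lambda>n. poisson_window a b (1 / real (Suc n)) x) \<longlonglongrightarrow> sgn_window a b x"
    by (intro AE_I2 poisson_window_tendsto)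
  show "\<And>n. AE x in M. norm (poisson_window a b (1 / real (Suc n)) x) \<le> 1"
    using abs_poisson_window_le_1 by auto
qed auto

lemma integral_sgn_window_shift_tendsto:
  assumes "a \<le> b"
  shows "(\<lambda>n::nat. \<integral>x. sgn_window (a + 1 / real (Suc n)) (b + 1 / real (Suc n)) x \<partial>M)
    \<longlonglongrightarrow> measure M {a<..b}"
proof -
  have "(\<lambda>n::nat. \<integral>x. sgn_window (a + 1 / real (Suc n)) (b + 1 / real (Suc n)) x \<partial>M)
      \<longlonglongrightarrow> (\<integral>x. indicator {a<..b} x \<partial>M)"
  proof (rule integral_dominated_convergence[where w = "\<lambda>_. 1"])
    show "AE x in M. (\<lambda>n. sgn_window (a + 1 / real (Suc n)) (b + 1 / real (Suc n)) x)
        \<longlonglongrightarrow> indicator {a<..b} x"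
      using sgn_window_shift_tendsto[OF assms] by auto
    show "\<And>n. AE x in M. norm (sgn_window (a + 1 / real (Suc n)) (b + 1 / real (Suc n)) x) \<le> 1"
      using abs_sgn_window_le_1 by auto
  qed auto
  then show ?thesis by (simp add: sets_eq_imp_space_eq[OF sets_M])
qed

end

theorem measure_eqI_cauchy_transform:
  assumes M: "finite_measure M" "sets M = sets borel"
    and N: "finite_measure N" "sets N = sets borel"
    and eq: "\<And>z. 0 < Im z \<Longrightarrow> cauchy_transform M z = cauchy_transform N z"
  shows "M = N"
proof -
  have sgn_window_eq: "(\<integral>x. sgn_window a b x \<partial>M) = (\<integral>x. sgn_window a b x \<partial>N)" if "a \<le> b" for a b
  proof -
    have "(\<lambda>n. \<integral>x. poisson_window a b (1 / real (Suc n)) x \<partial>M)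
        = (\<lambda>n. \<integral>x. poisson_window a b (1 / real (Suc n)) x \<partial>N)"
      using integral_poisson_window[OF M _ that] integral_poisson_window[OF N _ that] eq by simp
    then show ?thesis
      using integral_poisson_window_tendsto[OF M, of a b] integral_poisson_window_tendsto[OF N, of a b]
      by (simp add: LIMSEQ_unique)
  qed
  have "measure M {a<..b} = measure N {a<..b}" if "a \<le> b" for a b
  proof -
    have "(\<lambda>n. \<integral>x. sgn_window (a + 1 / real (Suc n)) (b + 1 / real (Suc n)) x \<partial>M)
        = (\<lambda>n. \<integral>x. sgn_window (a + 1 / real (Suc n)) (b + 1 / real (Suc n)) x \<partial>N)"
      using that by (intro ext sgn_window_eq) simp
    then show ?thesis
      using integral_sgn_window_shift_tendsto[OF M that] integral_sgn_window_shift_tendsto[OF N that]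
      by (simp add: LIMSEQ_unique)
  qed
  then have Ioc_eq: "emeasure M {a<..b} = emeasure N {a<..b}" for a b :: real
    by (cases "a \<le> b")
      (simp_all add: finite_measure.emeasure_eq_measure[OF M(1)] finite_measure.emeasure_eq_measure[OF N(1)])
  show ?thesis
  proof (rule measure_eqI_generator_eq[where \<Omega> = UNIV and E = "range (\<lambda>(a, b). {a<..b::real})"
        and A = "\<lambda>i. {- real i<..real i}"])
    show "sets M = sigma_sets UNIV (range (\<lambda>(a, b). {a<..b::real}))"
      "sets N = sigma_sets UNIV (range (\<lambda>(a, b). {a<..b::real}))"
      using M(2) N(2) by (simp_all add: borel_sigma_sets_Ioc)
    show "(\<Union>i. {- real (i::nat)<..real i}) = UNIV" by (rule UN_Ioc_eq_UNIV)
    show "\<And>i. emeasure M {- real i<..real i} \<noteq> \<infinity>"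
      using finite_measure.emeasure_finite[OF M(1)] by simp
    show "Int_stable (range (\<lambda>(a, b). {a<..b::real}))" by (auto simp: Int_stable_def)
    show "range (\<lambda>i. {- real i<..real i}) \<subseteq> range (\<lambda>(a, b). {a<..b::real})" by auto
    show "\<And>X. X \<in> range (\<lambda>(a, b). {a<..b::real}) \<Longrightarrow> emeasure M X = emeasure N X"
      using Ioc_eq by auto
  qed auto
qed

section \<open>Monotone convolution powers of the semicircle law\<close>

lemma monotone_conv_semicircle:
  assumes "prob_space \<mu>" "sets \<mu> = sets borel"
  shows "monotone_conv \<mu> semicircle = sc_mconv \<mu>"
proof -
  have H: "recip_cauchy (sc_mconv \<mu>) z = recip_cauchy \<mu> (recip_cauchy semicircle z)" if "0 < Im z" for z
    using cauchy_transform_sc_mconv[OF assms that] cauchy_transform_semicircle_upper(4)[OF that]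
    by (simp add: recip_cauchy_def)
  show ?thesis
    unfolding monotone_conv_def
  proof (rule the_equality)
    show "prob_space (sc_mconv \<mu>) \<and> sets (sc_mconv \<mu>) = sets borel \<and>
        (\<forall>z. 0 < Im z \<longrightarrow> recip_cauchy (sc_mconv \<mu>) z = recip_cauchy \<mu> (recip_cauchy semicircle z))"
      using prob_space_sc_mconv[OF assms] H by simp
  next
    fix \<rho> assume \<rho>: "prob_space \<rho> \<and> sets \<rho> = sets borel \<and>
        (\<forall>z. 0 < Im z \<longrightarrow> recip_cauchy \<rho> z = recip_cauchy \<mu> (recip_cauchy semicircle z))"
    show "\<rho> = sc_mconv \<mu>"
    proof (rule measure_eqI_cauchy_transform)
      show "finite_measure \<rho>" "finite_measure (sc_mconv \<mu>)"
        using \<rho> prob_space_sc_mconv[OF assms] by (auto intro: prob_space.finite_measure)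
      fix z :: complex assume "0 < Im z"
      then have "1 / cauchy_transform \<rho> z = 1 / cauchy_transform (sc_mconv \<mu>) z"
        using \<rho> H by (simp add: recip_cauchy_def)
      then show "cauchy_transform \<rho> z = cauchy_transform (sc_mconv \<mu>) z"
        by (simp add: divide_inverse)
    qed (use \<rho> in auto)
  qed
qed

lemma monotone_power_semicircle:
  "prob_space (monotone_power semicircle m) \<and> sets (monotone_power semicircle m) = sets borel"
  "monotone_power semicircle (Suc m) = sc_mconv (monotone_power semicircle m)"
proof -
  show *: "prob_space (monotone_power semicircle m) \<and> sets (monotone_power semicircle m) = sets borel"
  proof (induction m)
    case (Suc m)
    then show ?case using monotone_conv_semicircle prob_space_sc_mconv by simp
  qed (simp add: prob_space_return)
  show "monotone_power semicircle (Suc m) = sc_mconv (monotone_power semicircle m)"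
    using monotone_conv_semicircle * by simp
qed

section \<open>Supports\<close>

lemma msupport_subset_of_null:
  assumes "sets M = sets borel" and "emeasure M {y. b < \<bar>y\<bar>} = 0"
  shows "msupport M \<subseteq> {-b..b}"
proof
  fix y assume y: "y \<in> msupport M"
  show "y \<in> {-b..b}"
  proof (rule ccontr)
    assume "y \<notin> {-b..b}"
    then have "ball y (\<bar>y\<bar> - b) \<subseteq> {y. b < \<bar>y\<bar>}" and "0 < \<bar>y\<bar> - b"
      by (auto simp: dist_real_def)
    then have "emeasure M (ball y (\<bar>y\<bar> - b)) = 0"
      using assms emeasure_mono[of "ball y (\<bar>y\<bar> - b)" "{y. b < \<bar>y\<bar>}" M] by simp
    moreover have "0 < measure M (ball y (\<bar>y\<bar> - b))"
      using y \<open>0 < \<bar>y\<bar> - b\<close> by (simp add: msupport_def)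
    ultimately show False by (simp add: measure_def)
  qed
qed

lemma AE_abs_le_of_null:
  assumes "sets M = sets borel" and "emeasure M {y. b < \<bar>y\<bar>} = 0"
  shows "AE y in M. \<bar>y::real\<bar> \<le> b"
  by (rule AE_I'[of "{y. b < \<bar>y\<bar>}"]) (use assms in \<open>auto simp: null_sets_def\<close>)

lemma in_msupportI:
  assumes "prob_space M" and "\<And>e. 0 < e \<Longrightarrow> 0 < emeasure M (ball x e)"
  shows "x \<in> msupport M"
  using assms by (simp add: msupport_def finite_measure.emeasure_eq_measure[OF prob_space.finite_measure])

lemma nn_integral_pos_of_pos_on:
  assumes [measurable]: "f \<in> borel_measurable M" "A \<in> sets M"
    and "0 < emeasure M A" and "\<And>x. x \<in> A \<Longrightarrow> 0 < f x"
  shows "0 < (\<integral>\<^sup>+x. f x \<partial>M)"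
proof (rule ccontr)
  assume "\<not> 0 < (\<integral>\<^sup>+x. f x \<partial>M)"
  then have "AE x in M. f x = 0" by (simp add: nn_integral_0_iff_AE zero_less_iff_neq_zero)
  then have "AE x in M. x \<notin> A" by eventually_elim (use assms(4) in force)
  then have "emeasure M {x \<in> space M. x \<in> A} = 0" by (rule emeasure_eq_0_AE)
  moreover have "{x \<in> space M. x \<in> A} = A" using sets.sets_into_space[OF assms(2)] by blast
  ultimately show False using assms(3) by simp
qed

lemma joukowski_strict_mono: "1 \<le> u \<Longrightarrow> u < v \<Longrightarrow> joukowski u < joukowski v"
proof -
  assume u: "1 \<le> u" and uv: "u < v"
  then have "1 < u * v" using less_1_mult[of u v] mult_strict_left_mono[of 1 v u] by force
  then have "0 < (v - u) * (1 - 1 / (u * v))" using uv by simp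
  moreover have "joukowski v - joukowski u = (v - u) * (1 - 1 / (u * v))"
    using u uv by (simp add: joukowski_def field_simps)
  ultimately show ?thesis by simp
qed

lemma joukowski_mono: "1 \<le> u \<Longrightarrow> u \<le> v \<Longrightarrow> joukowski u \<le> joukowski v"
  using joukowski_strict_mono[of u v] by (cases "u = v") auto

lemma abs_joukowski_le: "1 \<le> \<bar>x\<bar> \<Longrightarrow> \<bar>x\<bar> \<le> r \<Longrightarrow> \<bar>joukowski x\<bar> \<le> joukowski r"
proof -
  assume x: "1 \<le> \<bar>x\<bar>" and "\<bar>x\<bar> \<le> r"
  then have "joukowski \<bar>x\<bar> \<le> joukowski r" by (rule joukowski_mono)
  moreover have "\<bar>joukowski x\<bar> = joukowski \<bar>x\<bar>"
    using x joukowski_minus[of x] joukowski_mono[of 1 "\<bar>x\<bar>"] by (cases "0 \<le> x") (auto simp: joukowski_def)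
  ultimately show ?thesis by simp
qed

lemma joukowski_surj_gt_2:
  assumes "2 < y"
  obtains x where "1 < x" and "joukowski x = y"
proof -
  define s where "s = sqrt (y\<^sup>2 - 4)"
  have "0 < y\<^sup>2 - 4" using assms power_strict_mono[of 2 y 2] by simp
  then have s: "0 \<le> s" "s\<^sup>2 = y\<^sup>2 - 4" by (simp_all add: s_def)
  define x where "x = (y + s) / 2"
  have "1 < x" using assms s by (simp add: x_def)
  moreover have "x * ((y - s) / 2) = 1" using s by (simp add: x_def field_simps power2_eq_square)
  then have "joukowski x = y" using \<open>1 < x\<close> by (simp add: joukowski_def x_def field_simps)
  ultimately show ?thesis by (rule that)
qed

context
  fixes \<mu> :: "real measure"
  assumes prob: "prob_space \<mu>" and sets_\<mu>[measurable_cong]: "sets \<mu> = sets borel"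
begin

lemma emeasure_sc_mconv_outside:
  assumes r: "1 \<le> r" and bound: "AE x in \<mu>. \<bar>x\<bar> \<le> r"
  shows "emeasure (sc_mconv \<mu>) {y. joukowski r < \<bar>y\<bar>} = 0"
proof -
  define B where "B = {y::real. joukowski r < \<bar>y\<bar>}"
  have [measurable]: "B \<in> sets borel" unfolding B_def by measurable
  have zero: "ennreal (sc_kernel_density x u) * indicator B u = 0" for x u
    using joukowski_mono[OF order.refl r] sc_kernel_density_eq_0[of u x]
    by (cases "2 \<le> \<bar>u\<bar>") (auto simp: B_def joukowski_def)
  have bulk: "(\<integral>\<^sup>+u. ennreal (sc_kernel_density x u) * indicator B u \<partial>lborel) = 0" for x
    by (simp only: zero) simp
  have "AE x in \<mu>. (\<integral>\<^sup>+u. ennreal (sc_kernel_density x u) * indicator B u \<partial>lborel)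
      + ennreal (sc_kernel_atom x) * indicator B (joukowski x) = 0"
    using bound
  proof eventually_elim
    case (elim x)
    then show ?case
      using abs_joukowski_le[of x r] bulk[of x] by (cases "1 < \<bar>x\<bar>") (auto simp: B_def sc_kernel_atom_def)
  qed
  then have "emeasure (sc_mconv \<mu>) B = (\<integral>\<^sup>+x. 0 \<partial>\<mu>)"
    unfolding emeasure_sc_mconv[OF prob sets_\<mu> \<open>B \<in> sets borel\<close>] by (rule nn_integral_cong_AE)
  then show ?thesis by (simp add: B_def)
qed

lemma msupport_sc_mconv_bulk:
  assumes y: "\<bar>y\<bar> \<le> 2"
  shows "y \<in> msupport (sc_mconv \<mu>)"
proof (rule in_msupportI[OF prob_space_sc_mconv[OF prob sets_\<mu>]])
  fix e :: real assume e: "0 < e"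
  have [measurable]: "ball y e \<in> sets borel" by simp
  let ?I = "{max (y - e) (-2) <..< min (y + e) 2}"
  have "0 < (\<integral>\<^sup>+u. ennreal (sc_kernel_density x u) * indicator (ball y e) u \<partial>lborel)" for x
  proof (rule nn_integral_pos_of_pos_on[where A = ?I])
    show "0 < emeasure lborel ?I" using y e by (auto simp: abs_le_iff)
    fix u assume "u \<in> ?I"
    then have "u \<in> ball y e" "\<bar>u\<bar> < 2" by (auto simp: dist_real_def abs_less_iff)
    then show "0 < ennreal (sc_kernel_density x u) * indicator (ball y e) u"
      using sc_kernel_density_pos[of u x] by simp
  qed auto
  then have "0 < (\<integral>\<^sup>+x. (\<integral>\<^sup>+u. ennreal (sc_kernel_density x u) * indicator (ball y e) u \<partial>lborel) \<partial>\<mu>)"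
    using prob_space.emeasure_space_1[OF prob]
    by (rule_tac nn_integral_pos_of_pos_on[where A = "space \<mu>"]) auto
  also have "\<dots> \<le> emeasure (sc_mconv \<mu>) (ball y e)"
    unfolding emeasure_sc_mconv[OF prob sets_\<mu> \<open>ball y e \<in> sets borel\<close>] by (intro nn_integral_mono) simp
  finally show "0 < emeasure (sc_mconv \<mu>) (ball y e)" .
qed

lemma joukowski_in_msupport_sc_mconv:
  assumes x0: "x0 \<in> msupport \<mu>" and "1 < \<bar>x0\<bar>"
  shows "joukowski x0 \<in> msupport (sc_mconv \<mu>)"
proof (rule in_msupportI[OF prob_space_sc_mconv[OF prob sets_\<mu>]])
  fix e :: real assume e: "0 < e"
  have "isCont joukowski x0" unfolding joukowski_def using \<open>1 < \<bar>x0\<bar>\<close> by (intro continuous_intros) auto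
  then obtain d0 where d0: "0 < d0" "\<And>x. dist x x0 < d0 \<Longrightarrow> dist (joukowski x) (joukowski x0) < e"
    unfolding continuous_at_eps_delta using e by blast
  define d where "d = min d0 (\<bar>x0\<bar> - 1)"
  have d: "0 < d" using d0 \<open>1 < \<bar>x0\<bar>\<close> by (simp add: d_def)
  have near: "1 < \<bar>x\<bar> \<and> joukowski x \<in> ball (joukowski x0) e" if "x \<in> ball x0 d" for x
  proof -
    have "dist x x0 < d0" "\<bar>x - x0\<bar> < \<bar>x0\<bar> - 1"
      using that by (auto simp: d_def dist_real_def abs_minus_commute)
    then show ?thesis using d0(2)[of x] by (auto simp: dist_commute)
  qed
  have [measurable]: "ball x0 d \<in> sets borel" "ball (joukowski x0) e \<in> sets borel" by simp_all
  have "0 < emeasure \<mu> (ball x0 d)"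
    using x0 d prob by (simp add: msupport_def finite_measure.emeasure_eq_measure[OF prob_space.finite_measure])
  then have "0 < (\<integral>\<^sup>+x. ennreal (sc_kernel_atom x) * indicator (ball x0 d) x \<partial>\<mu>)"
  proof (rule nn_integral_pos_of_pos_on[rotated 2])
    fix x assume "x \<in> ball x0 d"
    then have "1 < \<bar>x\<bar>" using near by blast
    then have "1 < x\<^sup>2" using power_strict_mono[of 1 "\<bar>x\<bar>" 2] by simp
    then show "0 < ennreal (sc_kernel_atom x) * indicator (ball x0 d) x"
      using \<open>1 < \<bar>x\<bar>\<close> \<open>x \<in> ball x0 d\<close> by (simp add: sc_kernel_atom_def)
  qed auto
  also have "\<dots> \<le> emeasure (sc_mconv \<mu>) (ball (joukowski x0) e)"
    unfolding emeasure_sc_mconv[OF prob sets_\<mu> \<open>ball (joukowski x0) e \<in> sets borel\<close>]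
  proof (intro nn_integral_mono)
    fix x
    have "ennreal (sc_kernel_atom x) * indicator (ball x0 d) x
        \<le> ennreal (sc_kernel_atom x) * indicator (ball (joukowski x0) e) (joukowski x)"
      using near[of x] by (cases "x \<in> ball x0 d") auto
    then show "ennreal (sc_kernel_atom x) * indicator (ball x0 d) x
        \<le> (\<integral>\<^sup>+u. ennreal (sc_kernel_density x u) * indicator (ball (joukowski x0) e) u \<partial>lborel)
          + ennreal (sc_kernel_atom x) * indicator (ball (joukowski x0) e) (joukowski x)"
      by (simp add: add_increasing)
  qed
  finally show "0 < emeasure (sc_mconv \<mu>) (ball (joukowski x0) e)" .
qed

lemma msupport_sc_mconv:
  assumes r: "1 \<le> r" and bound: "AE x in \<mu>. \<bar>x\<bar> \<le> r"
    and outer: "{x. 1 < \<bar>x\<bar> \<and> \<bar>x\<bar> \<le> r} \<subseteq> msupport \<mu>"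
  shows "msupport (sc_mconv \<mu>) = {- joukowski r..joukowski r}"
proof
  show "msupport (sc_mconv \<mu>) \<subseteq> {- joukowski r..joukowski r}"
    by (rule msupport_subset_of_null[OF sets_sc_mconv emeasure_sc_mconv_outside[OF r bound]])
  show "{- joukowski r..joukowski r} \<subseteq> msupport (sc_mconv \<mu>)"
  proof
    fix y assume y: "y \<in> {- joukowski r..joukowski r}"
    show "y \<in> msupport (sc_mconv \<mu>)"
    proof (cases "\<bar>y\<bar> \<le> 2")
      case True
      then show ?thesis by (rule msupport_sc_mconv_bulk)
    next
      case False
      then obtain x where x: "1 < x" "joukowski x = \<bar>y\<bar>"
        using joukowski_surj_gt_2[of "\<bar>y\<bar>"] by auto
      have "x \<le> r"
        using joukowski_strict_mono[OF r, of x] x y by force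
      then have "x \<in> msupport \<mu>" "-x \<in> msupport \<mu>" using outer x(1) by auto
      then have "joukowski x \<in> msupport (sc_mconv \<mu>)" "joukowski (-x) \<in> msupport (sc_mconv \<mu>)"
        using joukowski_in_msupport_sc_mconv x(1) by auto
      then show ?thesis using x(2) joukowski_minus[of x] by (cases "0 \<le> y") auto
    qed
  qed
qed

end

fun sc_radius :: "nat \<Rightarrow> real" where
  "sc_radius 0 = 1"
| "sc_radius (Suc m) = joukowski (sc_radius m)"

lemma one_le_sc_radius: "1 \<le> sc_radius m"
proof (induction m)
  case (Suc m)
  then have "0 \<le> 1 / sc_radius m" by simp
  with Suc show ?case unfolding sc_radius.simps joukowski_def by linarith
qed simp

lemma monotone_power_semicircle_support_bound:
  "(AE y in monotone_power semicircle m. \<bar>y\<bar> \<le> sc_radius m) \<and>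
   {x. 1 < \<bar>x\<bar> \<and> \<bar>x\<bar> \<le> sc_radius m} \<subseteq> msupport (monotone_power semicircle m)"
proof (induction m)
  case 0
  have "AE y in return borel (0::real). \<bar>y\<bar> \<le> 1" by (simp add: AE_return)
  moreover have "{x::real. 1 < \<bar>x\<bar> \<and> \<bar>x\<bar> \<le> 1} = {}" by auto
  ultimately show ?case unfolding monotone_power.simps(1) sc_radius.simps(1)
    by (simp only: empty_subsetI simp_thms)
next
  case (Suc m)
  note \<mu> = monotone_power_semicircle(1)[of m, THEN conjunct1] monotone_power_semicircle(1)[of m, THEN conjunct2]
  have supp: "msupport (sc_mconv (monotone_power semicircle m)) = {- sc_radius (Suc m)..sc_radius (Suc m)}"
    using msupport_sc_mconv[OF \<mu> one_le_sc_radius[of m]] Suc.IH by simp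
  have "AE y in sc_mconv (monotone_power semicircle m). \<bar>y\<bar> \<le> sc_radius (Suc m)"
    using AE_abs_le_of_null[OF sets_sc_mconv emeasure_sc_mconv_outside[OF \<mu> one_le_sc_radius[of m]]]
      Suc.IH by simp
  moreover have "{x. 1 < \<bar>x\<bar> \<and> \<bar>x\<bar> \<le> sc_radius (Suc m)} \<subseteq> {- sc_radius (Suc m)..sc_radius (Suc m)}"
    by (auto simp del: sc_radius.simps)
  ultimately show ?case unfolding monotone_power_semicircle(2) supp by (simp del: sc_radius.simps)
qed

lemma msupport_monotone_power_semicircle:
  "msupport (monotone_power semicircle (Suc m)) = {- sc_radius (Suc m)..sc_radius (Suc m)}"
proof -
  note \<mu> = monotone_power_semicircle(1)[of m]
  show ?thesis
    unfolding monotone_power_semicircle(2)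
    using msupport_sc_mconv[OF \<mu>[THEN conjunct1] \<mu>[THEN conjunct2] one_le_sc_radius[of m]]
      monotone_power_semicircle_support_bound[of m]
    by simp
qed

theorem theorem3p9:
  fixes a :: "nat \<Rightarrow> real"
  assumes "a 1 = 2"
    and "\<And>m. m \<ge> 1 \<Longrightarrow> a (Suc m) = a m + 1 / a m"
  shows "(\<forall>m\<ge>1. msupport (monotone_power semicircle m) = {- a m .. a m}) \<and>
         (\<forall>m\<ge>2. msupport (monotone_power semicircle (m - 1))
                    \<subseteq> msupport (monotone_power semicircle m))"
proof -
  have radius: "a m = sc_radius m" if "1 \<le> m" for m
    using that
  proof (induction m rule: nat_induct_at_least)
    case (Suc m)
    then show ?case using assms(2)[OF Suc(1)] by (simp add: joukowski_def)
  qed (use assms(1) in \<open>simp add: joukowski_def\<close>)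
  have support: "msupport (monotone_power semicircle m) = {- a m .. a m}" if "1 \<le> m" for m
    using msupport_monotone_power_semicircle[of "m - 1"] radius[OF that] that by simp
  have "a (m - 1) \<le> a m" if "2 \<le> m" for m
  proof -
    have "1 \<le> a (m - 1)" using radius[of "m - 1"] one_le_sc_radius that by simp
    moreover have "a m = a (m - 1) + 1 / a (m - 1)" using assms(2)[of "m - 1"] that by simp
    ultimately show ?thesis by simp
  qed
  then show ?thesis using support by force
qed

end
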